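(* Let $N\ge1$, $T>0$, and consider the problem of minimizing $\int_0^T\mathbb V(t)\,dt$, $\mathbb V=\frac1N\sum_{i=1}^N\xi_i^2$, over $\alpha\in\mathcal U$, where $\dot\xi_i=-\xi_i+(1-\alpha_i)\bar\xi$, $\bar\xi=\frac1N\sum_j\xi_j$, with initial datum satisfying $\bar\xi(0)>0$ and $\xi_1(0)\ge\dots\ge\xi_N(0)$. Then there exists an optimal control whose trajectory satisfies: for all $t\in[0,T]$ and all $i<j$, $\xi_i(t)\ge\xi_j(t)$.
   Context: $\mathcal U$ is the set of measurable $\alpha:[0,T]\to[0,1]^N$ with $\sum_i\alpha_i(t)\le1$ for all $t$. *)

theory Defs
  imports "HOL-Analysis.Analysis"
begin

text \<open>States are vectors indexed by 0..N-1, encoded as nat \<Rightarrow> real.\<close>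

definition mean :: "nat \<Rightarrow> (nat \<Rightarrow> real) \<Rightarrow> real" where
  "mean N x = (1 / real N) * (\<Sum>j<N. x j)"

definition Vfun :: "nat \<Rightarrow> (nat \<Rightarrow> real) \<Rightarrow> real" where
  "Vfun N x = (1 / real N) * (\<Sum>i<N. (x i)^2)"

definition admissible :: "nat \<Rightarrow> real \<Rightarrow> (real \<Rightarrow> nat \<Rightarrow> real) \<Rightarrow> bool" where
  "admissible N T \<alpha> \<longleftrightarrow>
     (\<forall>i<N. (\<lambda>t. \<alpha> t i) \<in> borel_measurable (lebesgue_on {0..T})) \<and>
     (\<forall>t\<in>{0..T}. (\<forall>i<N. 0 \<le> \<alpha> t i \<and> \<alpha> t i \<le> 1) \<and> (\<Sum>i<N. \<alpha> t i) \<le> 1)"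

text \<open>Carath\'eodory (integral-form) solution of
  xi_i' = - xi_i + (1 - alpha_i) * mean xi on [0,T], xi(0) = xi0.\<close>
definition is_traj :: "nat \<Rightarrow> real \<Rightarrow> (nat \<Rightarrow> real) \<Rightarrow> (real \<Rightarrow> nat \<Rightarrow> real)
                        \<Rightarrow> (real \<Rightarrow> nat \<Rightarrow> real) \<Rightarrow> bool" where
  "is_traj N T \<xi>0 \<alpha> \<xi> \<longleftrightarrow>
     (\<forall>i<N. continuous_on {0..T} (\<lambda>t. \<xi> t i)) \<and>
     (\<forall>i<N. \<forall>t\<in>{0..T}.
        ((\<lambda>s. - \<xi> s i + (1 - \<alpha> s i) * mean N (\<xi> s)) has_integral (\<xi> t i - \<xi>0 i)) {0..t})"

definition cost :: "nat \<Rightarrow> real \<Rightarrow> (real \<Rightarrow> nat \<Rightarrow> real) \<Rightarrow> real" where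
  "cost N T \<xi> = integral {0..T} (\<lambda>t. Vfun N (\<xi> t))"

end

theory Submission
  imports Defs "HOL-Complex_Analysis.Great_Picard"
begin

text \<open>The dynamics are affine in the trajectory \<open>\<xi>\<close> and in the effective control \<open>\<alpha>\<^sub>i \<cdot> mean \<xi>\<close>,
  and the cost is strictly convex in \<open>\<xi>\<close>. Averaging two admissible pairs therefore gives an admissible
  pair of strictly smaller cost unless the trajectories agree, so the optimal trajectory is unique. If two
  coordinates of it crossed, exchanging their labels after their first meeting time would produce a second
  optimal trajectory; hence the initial ordering persists.

  Existence avoids weak compactness of the controls: in shrinking sublevel sets of the cost one picks
  near-minimisers of the \<open>L\<^sup>2\<close> norm of the effective control. Strict convexity of that norm makes them
  Cauchy in \<open>L\<^sup>2\<close>, hence a.e. convergent along a subsequence, while Arzela-Ascoli gives uniform convergence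
  of the trajectories; dominated convergence then passes to the limit in the integral equation.\<close>

section \<open>Trajectories\<close>

definition traj_rhs :: "nat \<Rightarrow> (real \<Rightarrow> nat \<Rightarrow> real) \<Rightarrow> (real \<Rightarrow> nat \<Rightarrow> real) \<Rightarrow> nat \<Rightarrow> real \<Rightarrow> real" where
  "traj_rhs N \<alpha> \<xi> i s = - \<xi> s i + (1 - \<alpha> s i) * mean N (\<xi> s)"

lemma sum_eq_mean: "(\<Sum>i<N. x i) = real N * mean N x"
  by (cases "N = 0") (simp_all add: mean_def)

lemma admissibleD:
  assumes "admissible N T \<alpha>" "s \<in> {0..T}"
  shows "\<And>i. i < N \<Longrightarrow> 0 \<le> \<alpha> s i" "\<And>i. i < N \<Longrightarrow> \<alpha> s i \<le> 1"
    "(\<Sum>i<N. \<alpha> s i) \<le> 1" "0 \<le> (\<Sum>i<N. \<alpha> s i)"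
proof -
  show "\<And>i. i < N \<Longrightarrow> 0 \<le> \<alpha> s i" "\<And>i. i < N \<Longrightarrow> \<alpha> s i \<le> 1" "(\<Sum>i<N. \<alpha> s i) \<le> 1"
    using assms unfolding admissible_def by auto
  then show "0 \<le> (\<Sum>i<N. \<alpha> s i)" by (intro sum_nonneg) auto
qed

lemma admissible_measurable:
  assumes "admissible N T \<alpha>" "i < N"
  shows "(\<lambda>t. \<alpha> t i) \<in> borel_measurable (lebesgue_on {0..T})"
  using assms unfolding admissible_def by blast

lemma is_traj_has_integral:
  assumes "is_traj N T \<xi>0 \<alpha> \<xi>" "i < N" "t \<in> {0..T}"
  shows "(traj_rhs N \<alpha> \<xi> i has_integral (\<xi> t i - \<xi>0 i)) {0..t}"
  using assms unfolding is_traj_def traj_rhs_def by blast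

lemma is_traj_continuous:
  assumes "is_traj N T \<xi>0 \<alpha> \<xi>" "i < N"
  shows "continuous_on {0..T} (\<lambda>t. \<xi> t i)"
  using assms unfolding is_traj_def by blast

lemma is_traj_start:
  assumes "is_traj N T \<xi>0 \<alpha> \<xi>" "i < N" "T \<ge> 0"
  shows "\<xi> 0 i = \<xi>0 i"
proof -
  have "(traj_rhs N \<alpha> \<xi> i has_integral (\<xi> 0 i - \<xi>0 i)) {0..0}"
    by (rule is_traj_has_integral[OF assms(1,2)]) (use assms(3) in simp)
  then show ?thesis by (simp add: has_integral_iff)
qed

lemma is_traj_increment:
  assumes "is_traj N T \<xi>0 \<alpha> \<xi>" "i < N" "0 \<le> a" "a \<le> b" "b \<le> T"
  shows "traj_rhs N \<alpha> \<xi> i integrable_on {a..b}"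
    and "\<xi> b i - \<xi> a i = integral {a..b} (traj_rhs N \<alpha> \<xi> i)"
proof -
  have hb: "(traj_rhs N \<alpha> \<xi> i has_integral (\<xi> b i - \<xi>0 i)) {0..b}"
    and ha: "(traj_rhs N \<alpha> \<xi> i has_integral (\<xi> a i - \<xi>0 i)) {0..a}"
    using is_traj_has_integral[OF assms(1,2)] assms by auto
  then have ib: "traj_rhs N \<alpha> \<xi> i integrable_on {0..b}" by blast
  show "traj_rhs N \<alpha> \<xi> i integrable_on {a..b}"
    by (rule integrable_subinterval_real[OF ib]) (use assms in auto)
  have "integral {0..a} (traj_rhs N \<alpha> \<xi> i) + integral {a..b} (traj_rhs N \<alpha> \<xi> i)
      = integral {0..b} (traj_rhs N \<alpha> \<xi> i)"
    using Henstock_Kurzweil_Integration.integral_combine[OF _ _ ib] assms by simp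
  then show "\<xi> b i - \<xi> a i = integral {a..b} (traj_rhs N \<alpha> \<xi> i)"
    using integral_unique[OF ha] integral_unique[OF hb] by linarith
qed

lemma is_traj_continuous_mean:
  assumes "is_traj N T \<xi>0 \<alpha> \<xi>"
  shows "continuous_on {0..T} (\<lambda>t. mean N (\<xi> t))"
  unfolding mean_def by (intro continuous_intros) (use is_traj_continuous[OF assms] in auto)

lemma is_traj_measurable_mean:
  assumes "is_traj N T \<xi>0 \<alpha> \<xi>"
  shows "(\<lambda>t. mean N (\<xi> t)) \<in> borel_measurable (lebesgue_on {0..T})"
  by (rule continuous_imp_measurable_on_sets_lebesgue[OF is_traj_continuous_mean[OF assms]]) auto

lemma sum_traj_rhs:
  "(\<Sum>i<N. traj_rhs N \<alpha> \<xi> i s) = - (\<Sum>i<N. \<alpha> s i) * mean N (\<xi> s)"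
  by (simp add: traj_rhs_def sum.distrib sum_subtractf sum_negf sum_distrib_right[symmetric] sum_eq_mean[where x = "\<xi> s"] algebra_simps)

lemma mean_traj_increment:
  assumes "is_traj N T \<xi>0 \<alpha> \<xi>" "0 \<le> a" "a \<le> b" "b \<le> T"
  shows "(\<lambda>s. - ((\<Sum>i<N. \<alpha> s i) / real N) * mean N (\<xi> s)) integrable_on {a..b}"
    and "mean N (\<xi> b) - mean N (\<xi> a) = integral {a..b} (\<lambda>s. - ((\<Sum>i<N. \<alpha> s i) / real N) * mean N (\<xi> s))"
proof -
  have int: "\<And>i. i \<in> {..<N} \<Longrightarrow> traj_rhs N \<alpha> \<xi> i integrable_on {a..b}"
    using is_traj_increment(1)[OF assms(1) _ assms(2-4)] by auto
  show "(\<lambda>s. - ((\<Sum>i<N. \<alpha> s i) / real N) * mean N (\<xi> s)) integrable_on {a..b}"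
  proof -
    have "(\<lambda>s. \<Sum>i<N. traj_rhs N \<alpha> \<xi> i s) integrable_on {a..b}"
      by (rule integrable_sum) (use int in auto)
    then have "(\<lambda>s. (1 / real N) * (\<Sum>i<N. traj_rhs N \<alpha> \<xi> i s)) integrable_on {a..b}"
      by (rule integrable_on_mult_right)
    then show ?thesis by (simp add: sum_traj_rhs)
  qed
  have "mean N (\<xi> b) - mean N (\<xi> a) = (1 / real N) * (\<Sum>i<N. \<xi> b i - \<xi> a i)"
    by (simp add: mean_def sum_subtractf algebra_simps)
  also have "\<dots> = (1 / real N) * (\<Sum>i<N. integral {a..b} (traj_rhs N \<alpha> \<xi> i))"
    using is_traj_increment(2)[OF assms(1) _ assms(2-4)] by simp
  also have "\<dots> = integral {a..b} (\<lambda>s. (1 / real N) * (\<Sum>i<N. traj_rhs N \<alpha> \<xi> i s))"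
    using integral_sum[OF finite_lessThan int] by simp
  finally show "mean N (\<xi> b) - mean N (\<xi> a) = integral {a..b} (\<lambda>s. - ((\<Sum>i<N. \<alpha> s i) / real N) * mean N (\<xi> s))"
    by (simp add: sum_traj_rhs)
qed

text \<open>Past the last time \<open>s1 \<le> t\<close> with \<open>g s1 \<le> K\<close>, the function stays above \<open>K\<close> and so cannot increase.\<close>
lemma continuous_on_barrier:
  fixes g :: "real \<Rightarrow> real"
  assumes cont: "continuous_on {0..t} g" and t: "0 \<le> t" and g0: "g 0 \<le> K"
    and step: "\<And>a b. 0 \<le> a \<Longrightarrow> a \<le> b \<Longrightarrow> b \<le> t \<Longrightarrow> (\<forall>s\<in>{a..b}. K \<le> g s) \<Longrightarrow> g b \<le> g a"
  shows "g t \<le> K"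
proof (rule ccontr)
  assume "\<not> g t \<le> K"
  then have gt: "g t > K" by simp
  define S where "S = {0..t} \<inter> g -` {..K}"
  have clS: "closed S" unfolding S_def
    by (rule continuous_closed_preimage[OF cont]) auto
  have bdd: "bdd_above S" by (auto simp: S_def bdd_above_def)
  define s1 where "s1 = Sup S"
  have "0 \<in> S" using t g0 by (auto simp: S_def)
  then have "s1 \<in> S" unfolding s1_def using closed_contains_Sup[OF _ bdd clS] by auto
  then have s1: "0 \<le> s1" "s1 \<le> t" "g s1 \<le> K" by (auto simp: S_def)
  have above: "K \<le> g s" if "s \<in> {s1..t}" "s \<noteq> s1" for s
  proof (rule ccontr)
    assume "\<not> K \<le> g s"
    then have "s \<in> S" using that s1 by (auto simp: S_def)
    then show False using cSup_upper[OF _ bdd] that by (fastforce simp: s1_def)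
  qed
  obtain x where x: "s1 \<le> x" "x \<le> t" "g x = K"
    using IVT'[of g s1 K t] s1 gt continuous_on_subset[OF cont] by fastforce
  then have "x \<in> S" using s1 by (auto simp: S_def)
  then have "g s1 = K" using cSup_upper[OF _ bdd] x by (fastforce simp: s1_def)
  moreover have "g t \<le> g s1" by (rule step) (use s1 above \<open>g s1 = K\<close> in force)+
  ultimately show False using gt by simp
qed

lemma mean_traj_start:
  assumes "is_traj N T \<xi>0 \<alpha> \<xi>" "T \<ge> 0"
  shows "mean N (\<xi> 0) = mean N \<xi>0"
  using is_traj_start[OF assms(1) _ assms(2)] by (simp add: mean_def)

lemma mean_traj_nonneg:
  assumes tr: "is_traj N T \<xi>0 \<alpha> \<xi>" and adm: "admissible N T \<alpha>"
    and m0: "mean N \<xi>0 \<ge> 0" and t: "t \<in> {0..T}"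
  shows "0 \<le> mean N (\<xi> t)"
proof -
  have "- mean N (\<xi> t) \<le> 0"
  proof (rule continuous_on_barrier[where g = "\<lambda>s. - mean N (\<xi> s)"])
    show "continuous_on {0..t} (\<lambda>s. - mean N (\<xi> s))"
      using t by (intro continuous_intros continuous_on_subset[OF is_traj_continuous_mean[OF tr]]) auto
    show "- mean N (\<xi> 0) \<le> 0" using mean_traj_start[OF tr] m0 t by simp
    fix a b assume ab: "0 \<le> a" "a \<le> b" "b \<le> t" and neg: "\<forall>s\<in>{a..b}. 0 \<le> - mean N (\<xi> s)"
    have "0 \<le> integral {a..b} (\<lambda>s. - ((\<Sum>i<N. \<alpha> s i) / real N) * mean N (\<xi> s))"
    proof (rule Henstock_Kurzweil_Integration.integral_nonneg)
      show "(\<lambda>s. - ((\<Sum>i<N. \<alpha> s i) / real N) * mean N (\<xi> s)) integrable_on {a..b}"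
        using mean_traj_increment(1)[OF tr ab(1,2)] t ab by simp
      fix s assume "s \<in> {a..b}"
      then show "0 \<le> - ((\<Sum>i<N. \<alpha> s i) / real N) * mean N (\<xi> s)"
        using neg admissibleD(4)[OF adm, of s] ab t
        by (auto simp: divide_nonpos_nonneg mult_nonneg_nonpos)
    qed
    then show "- mean N (\<xi> b) \<le> - mean N (\<xi> a)"
      using mean_traj_increment(2)[OF tr ab(1,2)] t ab by simp
  qed (use t in auto)
  then show ?thesis by simp
qed

lemma mean_traj_antimono:
  assumes tr: "is_traj N T \<xi>0 \<alpha> \<xi>" and adm: "admissible N T \<alpha>" and m0: "mean N \<xi>0 \<ge> 0"
    and ab: "0 \<le> a" "a \<le> b" "b \<le> T"
  shows "mean N (\<xi> b) \<le> mean N (\<xi> a)"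
proof -
  have "integral {a..b} (\<lambda>s. - ((\<Sum>i<N. \<alpha> s i) / real N) * mean N (\<xi> s)) \<le> integral {a..b} (\<lambda>s. 0)"
  proof (rule integral_le)
    show "(\<lambda>s. - ((\<Sum>i<N. \<alpha> s i) / real N) * mean N (\<xi> s)) integrable_on {a..b}"
      by (rule mean_traj_increment(1)[OF tr ab])
    fix s assume "s \<in> {a..b}"
    then have "s \<in> {0..T}" using ab by auto
    then show "- ((\<Sum>i<N. \<alpha> s i) / real N) * mean N (\<xi> s) \<le> 0"
      using admissibleD(4)[OF adm] mean_traj_nonneg[OF tr adm m0] by simp
  qed (rule integrable_0)
  then show ?thesis using mean_traj_increment(2)[OF tr ab] by simp
qed

lemma mean_traj_le_initial:
  assumes tr: "is_traj N T \<xi>0 \<alpha> \<xi>" and adm: "admissible N T \<alpha>" and m0: "mean N \<xi>0 \<ge> 0"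
    and t: "t \<in> {0..T}"
  shows "mean N (\<xi> t) \<le> mean N \<xi>0"
  using mean_traj_antimono[OF tr adm m0, of 0 t] mean_traj_start[OF tr] t by simp

text \<open>Each coordinate is pushed towards the interval between \<open>0\<close> and the (decreasing, nonnegative) mean,
  so it can never leave the interval spanned by its initial value, \<open>0\<close> and the initial mean.\<close>
lemma traj_abs_le:
  assumes tr: "is_traj N T \<xi>0 \<alpha> \<xi>" and adm: "admissible N T \<alpha>" and m0: "mean N \<xi>0 \<ge> 0"
    and i: "i < N" and t: "t \<in> {0..T}"
  shows "\<bar>\<xi> t i\<bar> \<le> \<bar>\<xi>0 i\<bar> + mean N \<xi>0"
proof -
  have T: "T \<ge> 0" using t by simp
  have cont: "continuous_on {0..t} (\<lambda>s. \<xi> s i)"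
    using continuous_on_subset[OF is_traj_continuous[OF tr i]] t by auto
  have start: "\<xi> 0 i = \<xi>0 i" by (rule is_traj_start[OF tr i T])
  have upper: "\<xi> t i \<le> max (\<xi>0 i) (mean N \<xi>0)"
  proof (rule continuous_on_barrier[OF cont])
    fix a b assume ab: "0 \<le> a" "a \<le> b" "b \<le> t"
      and above: "\<forall>s\<in>{a..b}. max (\<xi>0 i) (mean N \<xi>0) \<le> \<xi> s i"
    have "integral {a..b} (traj_rhs N \<alpha> \<xi> i) \<le> integral {a..b} (\<lambda>s. 0)"
    proof (rule integral_le)
      show "traj_rhs N \<alpha> \<xi> i integrable_on {a..b}"
        using is_traj_increment(1)[OF tr i] ab t by simp
      fix s assume s: "s \<in> {a..b}"
      then have sT: "s \<in> {0..T}" using ab t by auto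
      have "(1 - \<alpha> s i) * mean N (\<xi> s) \<le> mean N (\<xi> s)"
        using admissibleD(1)[OF adm sT i] mean_traj_nonneg[OF tr adm m0 sT]
        by (simp add: algebra_simps)
      moreover have "mean N \<xi>0 \<le> \<xi> s i" using above s by auto
      ultimately show "traj_rhs N \<alpha> \<xi> i s \<le> 0"
        using mean_traj_le_initial[OF tr adm m0 sT] by (simp add: traj_rhs_def)
    qed (rule integrable_0)
    then show "\<xi> b i \<le> \<xi> a i" using is_traj_increment(2)[OF tr i, of a b] ab t by simp
  qed (use t start in auto)
  have lower: "- \<xi> t i \<le> max (- \<xi>0 i) 0"
  proof (rule continuous_on_barrier[where g = "\<lambda>s. - \<xi> s i"])
    show "continuous_on {0..t} (\<lambda>s. - \<xi> s i)" using cont by (intro continuous_intros)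
    fix a b assume ab: "0 \<le> a" "a \<le> b" "b \<le> t" and below: "\<forall>s\<in>{a..b}. max (- \<xi>0 i) 0 \<le> - \<xi> s i"
    have "0 \<le> integral {a..b} (traj_rhs N \<alpha> \<xi> i)"
    proof (rule Henstock_Kurzweil_Integration.integral_nonneg)
      show "traj_rhs N \<alpha> \<xi> i integrable_on {a..b}"
        using is_traj_increment(1)[OF tr i] ab t by simp
      fix s assume s: "s \<in> {a..b}"
      then have sT: "s \<in> {0..T}" using ab t by auto
      have "0 \<le> (1 - \<alpha> s i) * mean N (\<xi> s)"
        using admissibleD(2)[OF adm sT i] mean_traj_nonneg[OF tr adm m0 sT] by simp
      moreover have "\<xi> s i \<le> 0" using below s by auto
      ultimately show "0 \<le> traj_rhs N \<alpha> \<xi> i s" by (simp add: traj_rhs_def)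
    qed
    then show "- \<xi> b i \<le> - \<xi> a i" using is_traj_increment(2)[OF tr i, of a b] ab t by simp
  qed (use t start in auto)
  show ?thesis using upper lower m0 by auto
qed

definition traj_bound :: "nat \<Rightarrow> (nat \<Rightarrow> real) \<Rightarrow> real" where
  "traj_bound N \<xi>0 = (\<Sum>k<N. \<bar>\<xi>0 k\<bar>) + mean N \<xi>0"

lemma traj_bound_nonneg: "mean N \<xi>0 \<ge> 0 \<Longrightarrow> 0 \<le> traj_bound N \<xi>0"
  unfolding traj_bound_def by (simp add: sum_nonneg)

lemma traj_abs_le_bound:
  assumes tr: "is_traj N T \<xi>0 \<alpha> \<xi>" and adm: "admissible N T \<alpha>" and m0: "mean N \<xi>0 \<ge> 0"
    and i: "i < N" and t: "t \<in> {0..T}"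
  shows "\<bar>\<xi> t i\<bar> \<le> traj_bound N \<xi>0"
proof -
  have "\<bar>\<xi>0 i\<bar> \<le> (\<Sum>k<N. \<bar>\<xi>0 k\<bar>)" using i by (intro member_le_sum) auto
  then show ?thesis using traj_abs_le[OF assms] by (simp add: traj_bound_def)
qed

lemma traj_rhs_abs_le:
  assumes tr: "is_traj N T \<xi>0 \<alpha> \<xi>" and adm: "admissible N T \<alpha>" and m0: "mean N \<xi>0 \<ge> 0"
    and i: "i < N" and s: "s \<in> {0..T}"
  shows "\<bar>traj_rhs N \<alpha> \<xi> i s\<bar> \<le> 2 * traj_bound N \<xi>0"
proof -
  have "\<bar>(1 - \<alpha> s i) * mean N (\<xi> s)\<bar> \<le> 1 * mean N \<xi>0"
    using admissibleD(1,2)[OF adm s i] mean_traj_nonneg[OF tr adm m0 s]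
      mean_traj_le_initial[OF tr adm m0 s]
    unfolding abs_mult by (intro mult_mono) auto
  moreover have "mean N \<xi>0 \<le> traj_bound N \<xi>0" unfolding traj_bound_def by (simp add: sum_nonneg)
  ultimately show ?thesis using traj_abs_le_bound[OF assms] unfolding traj_rhs_def by linarith
qed

lemma traj_lipschitz:
  assumes tr: "is_traj N T \<xi>0 \<alpha> \<xi>" and adm: "admissible N T \<alpha>" and m0: "mean N \<xi>0 \<ge> 0"
    and i: "i < N" and x: "x \<in> {0..T}" and y: "y \<in> {0..T}"
  shows "\<bar>\<xi> x i - \<xi> y i\<bar> \<le> 2 * traj_bound N \<xi>0 * \<bar>x - y\<bar>"
proof -
  have *: "\<bar>\<xi> b i - \<xi> a i\<bar> \<le> 2 * traj_bound N \<xi>0 * (b - a)" if ab: "0 \<le> a" "a \<le> b" "b \<le> T" for a b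
  proof -
    have "norm (integral {a..b} (traj_rhs N \<alpha> \<xi> i)) \<le> integral {a..b} (\<lambda>s. 2 * traj_bound N \<xi>0)"
    proof (rule integral_norm_bound_integral)
      show "traj_rhs N \<alpha> \<xi> i integrable_on {a..b}" by (rule is_traj_increment(1)[OF tr i ab])
      fix s assume "s \<in> {a..b}"
      then show "norm (traj_rhs N \<alpha> \<xi> i s) \<le> 2 * traj_bound N \<xi>0"
        using traj_rhs_abs_le[OF tr adm m0 i, of s] ab by simp
    qed (rule integrable_const_ivl)
    then show ?thesis using is_traj_increment(2)[OF tr i ab] ab by (simp add: algebra_simps)
  qed
  show ?thesis
    using *[of x y] *[of y x] x y by (cases "x \<le> y") (auto simp: abs_minus_commute)
qed

section \<open>Convexity\<close>

text \<open>\<open>mid_control\<close> recovers \<open>\<alpha>\<close> from the average of the effective controls \<open>\<alpha>\<^sub>i \<cdot> mean \<xi>\<close>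
  of two pairs.\<close>
definition mid_control :: "nat \<Rightarrow> (real \<Rightarrow> nat \<Rightarrow> real) \<Rightarrow> (real \<Rightarrow> nat \<Rightarrow> real) \<Rightarrow>
    (real \<Rightarrow> nat \<Rightarrow> real) \<Rightarrow> (real \<Rightarrow> nat \<Rightarrow> real) \<Rightarrow> real \<Rightarrow> nat \<Rightarrow> real" where
  "mid_control N \<alpha> \<xi> \<beta> \<eta> t i =
     (\<alpha> t i * mean N (\<xi> t) + \<beta> t i * mean N (\<eta> t)) / (mean N (\<xi> t) + mean N (\<eta> t))"

definition mid_traj :: "(real \<Rightarrow> nat \<Rightarrow> real) \<Rightarrow> (real \<Rightarrow> nat \<Rightarrow> real) \<Rightarrow> real \<Rightarrow> nat \<Rightarrow> real" where
  "mid_traj \<xi> \<eta> t i = (\<xi> t i + \<eta> t i) / 2"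

lemma mean_mid_traj: "mean N (mid_traj \<xi> \<eta> t) = (mean N (\<xi> t) + mean N (\<eta> t)) / 2"
  by (cases "N = 0") (simp_all add: mean_def mid_traj_def sum.distrib sum_divide_distrib[symmetric] field_simps)

lemma mid_control_mult_mean:
  assumes "0 \<le> mean N (\<xi> t)" "0 \<le> mean N (\<eta> t)"
  shows "mid_control N \<alpha> \<xi> \<beta> \<eta> t i * mean N (mid_traj \<xi> \<eta> t)
    = (\<alpha> t i * mean N (\<xi> t) + \<beta> t i * mean N (\<eta> t)) / 2"
proof (cases "mean N (\<xi> t) + mean N (\<eta> t) = 0")
  case True
  then have "mean N (\<xi> t) = 0" "mean N (\<eta> t) = 0" using assms by linarith+
  then show ?thesis by (simp add: mean_mid_traj)
next
  case False
  then show ?thesis by (simp add: mid_control_def mean_mid_traj)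
qed

lemma weighted_mean_unit_interval:
  fixes a b p q :: real
  assumes "0 \<le> p" "0 \<le> q" "0 \<le> a" "a \<le> 1" "0 \<le> b" "b \<le> 1"
  shows "0 \<le> (a * p + b * q) / (p + q)" "(a * p + b * q) / (p + q) \<le> 1"
proof -
  show "0 \<le> (a * p + b * q) / (p + q)" using assms by simp
  have "a * p + b * q \<le> 1 * p + 1 * q" using assms by (intro add_mono mult_right_mono) auto
  then show "(a * p + b * q) / (p + q) \<le> 1"
    using assms by (cases "p + q = 0") (simp_all add: divide_le_eq)
qed

lemma admissible_mid_control:
  assumes m0: "mean N \<xi>0 \<ge> 0"
    and a1: "admissible N T \<alpha>" and t1: "is_traj N T \<xi>0 \<alpha> \<xi>"
    and a2: "admissible N T \<beta>" and t2: "is_traj N T \<xi>0 \<beta> \<eta>"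
  shows "admissible N T (mid_control N \<alpha> \<xi> \<beta> \<eta>)"
  unfolding admissible_def
proof (intro conjI allI impI ballI)
  fix i assume i: "i < N"
  have [measurable]: "(\<lambda>t. \<alpha> t i) \<in> borel_measurable (lebesgue_on {0..T})"
    "(\<lambda>t. \<beta> t i) \<in> borel_measurable (lebesgue_on {0..T})"
    "(\<lambda>t. mean N (\<xi> t)) \<in> borel_measurable (lebesgue_on {0..T})"
    "(\<lambda>t. mean N (\<eta> t)) \<in> borel_measurable (lebesgue_on {0..T})"
    using admissible_measurable[OF a1 i] admissible_measurable[OF a2 i]
      is_traj_measurable_mean[OF t1] is_traj_measurable_mean[OF t2] .
  show "(\<lambda>t. mid_control N \<alpha> \<xi> \<beta> \<eta> t i) \<in> borel_measurable (lebesgue_on {0..T})"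
    unfolding mid_control_def by measurable
next
  fix t i assume t: "t \<in> {0..T}" and i: "i < N"
  note unit = weighted_mean_unit_interval[OF mean_traj_nonneg[OF t1 a1 m0 t] mean_traj_nonneg[OF t2 a2 m0 t]
      admissibleD(1,2)[OF a1 t i] admissibleD(1,2)[OF a2 t i]]
  show "0 \<le> mid_control N \<alpha> \<xi> \<beta> \<eta> t i" "mid_control N \<alpha> \<xi> \<beta> \<eta> t i \<le> 1"
    using unit by (simp_all add: mid_control_def)
next
  fix t assume t: "t \<in> {0..T}"
  have "(\<Sum>i<N. mid_control N \<alpha> \<xi> \<beta> \<eta> t i)
      = ((\<Sum>i<N. \<alpha> t i) * mean N (\<xi> t) + (\<Sum>i<N. \<beta> t i) * mean N (\<eta> t)) / (mean N (\<xi> t) + mean N (\<eta> t))"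
    unfolding mid_control_def by (simp add: sum_divide_distrib[symmetric] sum.distrib sum_distrib_right)
  also have "\<dots> \<le> 1"
    by (rule weighted_mean_unit_interval(2)[OF mean_traj_nonneg[OF t1 a1 m0 t] mean_traj_nonneg[OF t2 a2 m0 t]
      admissibleD(4,3)[OF a1 t] admissibleD(4,3)[OF a2 t]])
  finally show "(\<Sum>i<N. mid_control N \<alpha> \<xi> \<beta> \<eta> t i) \<le> 1" .
qed

lemma is_traj_mid_traj:
  assumes m0: "mean N \<xi>0 \<ge> 0"
    and a1: "admissible N T \<alpha>" and t1: "is_traj N T \<xi>0 \<alpha> \<xi>"
    and a2: "admissible N T \<beta>" and t2: "is_traj N T \<xi>0 \<beta> \<eta>"
  shows "is_traj N T \<xi>0 (mid_control N \<alpha> \<xi> \<beta> \<eta>) (mid_traj \<xi> \<eta>)"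
  unfolding is_traj_def
proof (intro conjI allI impI ballI)
  fix i assume i: "i < N"
  show "continuous_on {0..T} (\<lambda>t. mid_traj \<xi> \<eta> t i)"
    unfolding mid_traj_def
    using is_traj_continuous[OF t1 i] is_traj_continuous[OF t2 i] by (intro continuous_intros) auto
  fix t assume t: "t \<in> {0..T}"
  have "((\<lambda>s. (traj_rhs N \<alpha> \<xi> i s + traj_rhs N \<beta> \<eta> i s) / 2)
      has_integral ((\<xi> t i - \<xi>0 i) + (\<eta> t i - \<xi>0 i)) / 2) {0..t}"
    using has_integral_add[OF is_traj_has_integral[OF t1 i t] is_traj_has_integral[OF t2 i t]]
    by (rule has_integral_divide)
  moreover have "(traj_rhs N \<alpha> \<xi> i s + traj_rhs N \<beta> \<eta> i s) / 2
      = - mid_traj \<xi> \<eta> s i + (1 - mid_control N \<alpha> \<xi> \<beta> \<eta> s i) * mean N (mid_traj \<xi> \<eta> s)"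
    if "s \<in> {0..t}" for s
  proof -
    have "s \<in> {0..T}" using that t by auto
    then show ?thesis
      using mid_control_mult_mean[OF mean_traj_nonneg[OF t1 a1 m0] mean_traj_nonneg[OF t2 a2 m0]]
      by (simp add: traj_rhs_def mid_traj_def mean_mid_traj algebra_simps add_divide_distrib diff_divide_distrib)
  qed
  moreover have "((\<xi> t i - \<xi>0 i) + (\<eta> t i - \<xi>0 i)) / 2 = mid_traj \<xi> \<eta> t i - \<xi>0 i"
    by (simp add: mid_traj_def field_simps)
  ultimately show "((\<lambda>s. - mid_traj \<xi> \<eta> s i + (1 - mid_control N \<alpha> \<xi> \<beta> \<eta> s i) * mean N (mid_traj \<xi> \<eta> s))
      has_integral (mid_traj \<xi> \<eta> t i - \<xi>0 i)) {0..t}"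
    using has_integral_eq by (metis (no_types, lifting))
qed

lemma Vfun_nonneg: "0 \<le> Vfun N x"
  unfolding Vfun_def by (simp add: sum_nonneg)

lemma Vfun_mid_traj:
  "Vfun N (mid_traj \<xi> \<eta> t) = (Vfun N (\<xi> t) + Vfun N (\<eta> t)) / 2 - Vfun N (\<lambda>i. \<xi> t i - \<eta> t i) / 4"
proof -
  have "(\<Sum>i<N. (mid_traj \<xi> \<eta> t i)\<^sup>2)
      = (\<Sum>i<N. ((\<xi> t i)\<^sup>2 + (\<eta> t i)\<^sup>2) / 2 - (\<xi> t i - \<eta> t i)\<^sup>2 / 4)"
    by (rule sum.cong) (auto simp: mid_traj_def power2_eq_square field_simps)
  also have "\<dots> = ((\<Sum>i<N. (\<xi> t i)\<^sup>2) + (\<Sum>i<N. (\<eta> t i)\<^sup>2)) / 2 - (\<Sum>i<N. (\<xi> t i - \<eta> t i)\<^sup>2) / 4"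
    by (simp add: sum_subtractf sum_divide_distrib[symmetric] sum.distrib)
  finally have e: "(\<Sum>i<N. (mid_traj \<xi> \<eta> t i)\<^sup>2) = ((\<Sum>i<N. (\<xi> t i)\<^sup>2) + (\<Sum>i<N. (\<eta> t i)\<^sup>2)) / 2
    - (\<Sum>i<N. (\<xi> t i - \<eta> t i)\<^sup>2) / 4" .
  show ?thesis unfolding Vfun_def e by (cases "N = 0") (simp_all add: field_simps)
qed

lemma continuous_on_Vfun:
  assumes "\<And>i. i < N \<Longrightarrow> continuous_on S (\<lambda>t. x t i)"
  shows "continuous_on S (\<lambda>t. Vfun N (x t))"
  unfolding Vfun_def by (intro continuous_intros) (use assms in auto)

lemma integrable_Vfun_traj:
  assumes "is_traj N T \<xi>0 \<alpha> \<xi>"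
  shows "(\<lambda>t. Vfun N (\<xi> t)) integrable_on {0..T}"
  by (intro integrable_continuous_interval continuous_on_Vfun) (use is_traj_continuous[OF assms] in auto)

lemma integrable_Vfun_traj_diff:
  assumes "is_traj N T \<xi>0 \<alpha> \<xi>" "is_traj N T \<xi>0 \<beta> \<eta>"
  shows "(\<lambda>t. Vfun N (\<lambda>i. \<xi> t i - \<eta> t i)) integrable_on {0..T}"
  by (intro integrable_continuous_interval continuous_on_Vfun continuous_intros)
    (use is_traj_continuous[OF assms(1)] is_traj_continuous[OF assms(2)] in auto)

lemma cost_nonneg:
  assumes "is_traj N T \<xi>0 \<alpha> \<xi>"
  shows "0 \<le> cost N T \<xi>"
  unfolding cost_def
  by (rule Henstock_Kurzweil_Integration.integral_nonneg[OF integrable_Vfun_traj[OF assms]]) (simp add: Vfun_nonneg)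

lemma cost_mid_traj:
  assumes t1: "is_traj N T \<xi>0 \<alpha> \<xi>" and t2: "is_traj N T \<xi>0 \<beta> \<eta>"
  shows "cost N T (mid_traj \<xi> \<eta>)
    = (cost N T \<xi> + cost N T \<eta>) / 2 - integral {0..T} (\<lambda>t. Vfun N (\<lambda>i. \<xi> t i - \<eta> t i)) / 4"
proof -
  note i1 = integrable_Vfun_traj[OF t1] and i2 = integrable_Vfun_traj[OF t2]
    and i3 = integrable_Vfun_traj_diff[OF t1 t2]
  have "cost N T (mid_traj \<xi> \<eta>)
      = integral {0..T} (\<lambda>t. (Vfun N (\<xi> t) + Vfun N (\<eta> t)) / 2 - Vfun N (\<lambda>i. \<xi> t i - \<eta> t i) / 4)"
    unfolding cost_def Vfun_mid_traj ..
  also have "\<dots> = integral {0..T} (\<lambda>t. (Vfun N (\<xi> t) + Vfun N (\<eta> t)) / 2)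
      - integral {0..T} (\<lambda>t. Vfun N (\<lambda>i. \<xi> t i - \<eta> t i) / 4)"
    by (rule integral_diff) (use i1 i2 i3 in \<open>auto intro: integrable_add integrable_on_divide\<close>)
  also have "\<dots> = (cost N T \<xi> + cost N T \<eta>) / 2 - integral {0..T} (\<lambda>t. Vfun N (\<lambda>i. \<xi> t i - \<eta> t i)) / 4"
    unfolding cost_def using integral_add[OF i1 i2] by simp
  finally show ?thesis .
qed

text \<open>The cost is strictly convex along \<open>mid_traj\<close>, so two optimal trajectories coincide.\<close>
lemma optimal_traj_unique:
  assumes T: "T > 0" and m0: "mean N \<xi>0 \<ge> 0"
    and a1: "admissible N T \<alpha>" and t1: "is_traj N T \<xi>0 \<alpha> \<xi>"
    and a2: "admissible N T \<beta>" and t2: "is_traj N T \<xi>0 \<beta> \<eta>"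
    and opt: "\<forall>\<beta> \<eta>. admissible N T \<beta> \<and> is_traj N T \<xi>0 \<beta> \<eta> \<longrightarrow> cost N T \<xi> \<le> cost N T \<eta>"
    and same_cost: "cost N T \<eta> = cost N T \<xi>"
    and t: "t \<in> {0..T}" and k: "k < N"
  shows "\<eta> t k = \<xi> t k"
proof -
  let ?D = "\<lambda>t. Vfun N (\<lambda>i. \<xi> t i - \<eta> t i)"
  have "cost N T \<xi> \<le> cost N T (mid_traj \<xi> \<eta>)"
    using opt admissible_mid_control[OF m0 a1 t1 a2 t2] is_traj_mid_traj[OF m0 a1 t1 a2 t2] by blast
  then have "integral {0..T} ?D \<le> 0" unfolding cost_mid_traj[OF t1 t2] same_cost by simp
  moreover have "0 \<le> integral {0..T} ?D"
    by (rule Henstock_Kurzweil_Integration.integral_nonneg[OF integrable_Vfun_traj_diff[OF t1 t2]])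
      (simp add: Vfun_nonneg)
  ultimately have "(?D has_integral 0) (cbox 0 T)"
    using integrable_integral[OF integrable_Vfun_traj_diff[OF t1 t2]] by simp
  then have "?D t = 0"
    by (rule has_integral_0_cbox_imp_0[rotated 2])
      (use t T in \<open>auto simp: Vfun_nonneg intro!: continuous_on_Vfun continuous_intros
        is_traj_continuous[OF t1] is_traj_continuous[OF t2]\<close>)
  then have "(\<Sum>i<N. (\<xi> t i - \<eta> t i)\<^sup>2) = 0" using k by (simp add: Vfun_def)
  then show ?thesis using k by (subst (asm) sum_nonneg_eq_0_iff) auto
qed

section \<open>Exchanging two coordinates\<close>

definition swap_after :: "nat \<Rightarrow> nat \<Rightarrow> real \<Rightarrow> (real \<Rightarrow> nat \<Rightarrow> real) \<Rightarrow> real \<Rightarrow> nat \<Rightarrow> real" where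
  "swap_after i j t0 x t k = (if t \<le> t0 then x t k else x t (Transposition.transpose i j k))"

lemma sum_transpose:
  assumes "i < N" "j < N"
  shows "(\<Sum>k<N. f (Transposition.transpose i j k)) = (\<Sum>k<N. f k)"
  by (rule sum.reindex_bij_betw) (use assms in simp)

lemma transpose_less:
  "i < N \<Longrightarrow> j < N \<Longrightarrow> k < N \<Longrightarrow> Transposition.transpose i j k < N"
  by (simp add: Transposition.transpose_def)

lemma mean_swap_after: "i < N \<Longrightarrow> j < N \<Longrightarrow> mean N (swap_after i j t0 x t) = mean N (x t)"
  by (cases "t \<le> t0") (simp_all add: mean_def swap_after_def sum_transpose[where f = "x t"])

lemma Vfun_swap_after: "i < N \<Longrightarrow> j < N \<Longrightarrow> Vfun N (swap_after i j t0 x t) = Vfun N (x t)"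
  by (cases "t \<le> t0") (simp_all add: Vfun_def swap_after_def sum_transpose[where f = "\<lambda>k. (x t k)\<^sup>2"])

lemma admissible_swap_after:
  assumes adm: "admissible N T \<alpha>" and ij: "i < N" "j < N"
  shows "admissible N T (swap_after i j t0 \<alpha>)"
  unfolding admissible_def
proof (intro conjI allI impI ballI)
  fix k assume k: "k < N"
  have [measurable]: "(\<lambda>t. \<alpha> t k) \<in> borel_measurable (lebesgue_on {0..T})"
    "(\<lambda>t. \<alpha> t (Transposition.transpose i j k)) \<in> borel_measurable (lebesgue_on {0..T})"
    using admissible_measurable[OF adm k] admissible_measurable[OF adm transpose_less[OF ij k]] .
  have [measurable]: "(\<lambda>t. t) \<in> borel_measurable (lebesgue_on {0..T::real})"
    by (rule continuous_imp_measurable_on_sets_lebesgue) (auto intro: continuous_on_id)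
  show "(\<lambda>t. swap_after i j t0 \<alpha> t k) \<in> borel_measurable (lebesgue_on {0..T})"
    unfolding swap_after_def by measurable
next
  fix t k assume t: "t \<in> {0..T}" and k: "k < N"
  show "0 \<le> swap_after i j t0 \<alpha> t k" "swap_after i j t0 \<alpha> t k \<le> 1"
    using admissibleD(1,2)[OF adm t k] admissibleD(1,2)[OF adm t transpose_less[OF ij k]]
    by (auto simp: swap_after_def)
next
  fix t assume t: "t \<in> {0..T}"
  show "(\<Sum>k<N. swap_after i j t0 \<alpha> t k) \<le> 1"
    using admissibleD(3)[OF adm t] sum_transpose[OF ij, of "\<alpha> t"]
    by (cases "t \<le> t0") (simp_all add: swap_after_def)
qed

lemma is_traj_swap_after:
  assumes tr: "is_traj N T \<xi>0 \<alpha> \<xi>" and ij: "i < N" "j < N"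
    and t0: "t0 \<in> {0..T}" and meet: "\<xi> t0 i = \<xi> t0 j"
  shows "is_traj N T \<xi>0 (swap_after i j t0 \<alpha>) (swap_after i j t0 \<xi>)"
  unfolding is_traj_def
proof (intro conjI allI impI ballI)
  fix k assume k: "k < N"
  let ?k' = "Transposition.transpose i j k"
  have k': "?k' < N" by (rule transpose_less[OF ij k])
  have meet': "\<xi> t0 ?k' = \<xi> t0 k" using meet by (simp add: Transposition.transpose_def)
  have "continuous_on ({0..t0} \<union> {t0..T}) (\<lambda>t. swap_after i j t0 \<xi> t k)"
  proof (rule continuous_on_closed_Un)
    show "continuous_on {0..t0} (\<lambda>t. swap_after i j t0 \<xi> t k)"
      by (rule continuous_on_eq[OF continuous_on_subset[OF is_traj_continuous[OF tr k]]])
        (use t0 in \<open>auto simp: swap_after_def\<close>)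
    show "continuous_on {t0..T} (\<lambda>t. swap_after i j t0 \<xi> t k)"
      by (rule continuous_on_eq[OF continuous_on_subset[OF is_traj_continuous[OF tr k']]])
        (use t0 meet' in \<open>auto simp: swap_after_def\<close>)
  qed auto
  moreover have "{0..t0} \<union> {t0..T} = {0..T}" using t0 by auto
  ultimately show "continuous_on {0..T} (\<lambda>t. swap_after i j t0 \<xi> t k)" by simp
  fix t assume t: "t \<in> {0..T}"
  let ?g = "\<lambda>s. - swap_after i j t0 \<xi> s k + (1 - swap_after i j t0 \<alpha> s k) * mean N (swap_after i j t0 \<xi> s)"
  have before: "?g s = traj_rhs N \<alpha> \<xi> k s" if "s \<le> t0" for s
    using that by (simp add: traj_rhs_def mean_swap_after[OF ij] swap_after_def)
  have after: "?g s = traj_rhs N \<alpha> \<xi> ?k' s" if "s \<in> {t0..t} - {t0}" for s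
    using that by (simp add: traj_rhs_def mean_swap_after[OF ij] swap_after_def)
  show "(?g has_integral (swap_after i j t0 \<xi> t k - \<xi>0 k)) {0..t}"
  proof (cases "t \<le> t0")
    case True
    have "(traj_rhs N \<alpha> \<xi> k has_integral (\<xi> t k - \<xi>0 k)) {0..t}"
      by (rule is_traj_has_integral[OF tr k t])
    then have "(?g has_integral (\<xi> t k - \<xi>0 k)) {0..t}"
      by (rule has_integral_eq[rotated]) (use before True in auto)
    then show ?thesis using True by (simp add: swap_after_def)
  next
    case False
    then have tt: "0 \<le> t0" "t0 \<le> t" "t \<le> T" using t t0 by auto
    have "(?g has_integral (\<xi> t0 k - \<xi>0 k)) {0..t0}"
      by (rule has_integral_eq[rotated, OF is_traj_has_integral[OF tr k t0]]) (use before in auto)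
    moreover have "(?g has_integral (\<xi> t ?k' - \<xi> t0 ?k')) {t0..t}"
      using is_traj_increment[OF tr k' tt]
      by (intro has_integral_spike_finite[of "{t0}", OF _ after]) (auto simp: has_integral_integral)
    ultimately have "(?g has_integral ((\<xi> t0 k - \<xi>0 k) + (\<xi> t ?k' - \<xi> t0 ?k'))) {0..t}"
      by (rule has_integral_combine[OF tt(1,2)])
    then show ?thesis using False meet' by (simp add: swap_after_def)
  qed
qed

text \<open>If the coordinates \<open>i < j\<close> crossed, swapping them after their meeting time would give another
  optimal trajectory.\<close>
lemma optimal_traj_ordered:
  assumes T: "T > 0" and m0: "mean N \<xi>0 \<ge> 0"
    and ord0: "\<And>i j. i \<le> j \<Longrightarrow> j < N \<Longrightarrow> \<xi>0 j \<le> \<xi>0 i"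
    and adm: "admissible N T \<alpha>" and tr: "is_traj N T \<xi>0 \<alpha> \<xi>"
    and opt: "\<forall>\<beta> \<eta>. admissible N T \<beta> \<and> is_traj N T \<xi>0 \<beta> \<eta> \<longrightarrow> cost N T \<xi> \<le> cost N T \<eta>"
    and t: "t \<in> {0..T}" and ij: "i < j" "j < N"
  shows "\<xi> t j \<le> \<xi> t i"
proof (rule ccontr)
  assume "\<not> \<xi> t j \<le> \<xi> t i"
  then have crossed: "\<xi> t i - \<xi> t j < 0" by simp
  have i: "i < N" using ij by simp
  have "0 \<le> \<xi> 0 i - \<xi> 0 j"
    using is_traj_start[OF tr i] is_traj_start[OF tr ij(2)] ord0[of i j] ij T by auto
  moreover have "continuous_on {0..t} (\<lambda>s. \<xi> s i - \<xi> s j)"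
    using t by (intro continuous_intros continuous_on_subset[OF is_traj_continuous[OF tr i]]
      continuous_on_subset[OF is_traj_continuous[OF tr ij(2)]]) auto
  ultimately obtain t0 where t0: "0 \<le> t0" "t0 \<le> t" "\<xi> t0 i - \<xi> t0 j = 0"
    using IVT2'[of "\<lambda>s. \<xi> s i - \<xi> s j" t 0 0] crossed t by auto
  then have t0T: "t0 \<in> {0..T}" and meet: "\<xi> t0 i = \<xi> t0 j" using t by auto
  have "t0 \<noteq> t" using t0 crossed by auto
  then have "swap_after i j t0 \<xi> t i = \<xi> t j" using t0 by (simp add: swap_after_def)
  moreover have "swap_after i j t0 \<xi> t i = \<xi> t i"
    by (rule optimal_traj_unique[OF T m0 adm tr admissible_swap_after[OF adm i ij(2)]
      is_traj_swap_after[OF tr i ij(2) t0T meet] opt _ t i])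
      (simp add: cost_def Vfun_swap_after[OF i ij(2)])
  ultimately show False using crossed by simp
qed

section \<open>Existence of an optimal control\<close>

type_synonym control_traj = "(real \<Rightarrow> nat \<Rightarrow> real) \<times> (real \<Rightarrow> nat \<Rightarrow> real)"

definition feasible :: "nat \<Rightarrow> real \<Rightarrow> (nat \<Rightarrow> real) \<Rightarrow> control_traj \<Rightarrow> bool" where
  "feasible N T \<xi>0 p \<longleftrightarrow> admissible N T (fst p) \<and> is_traj N T \<xi>0 (fst p) (snd p)"

definition eff_control :: "nat \<Rightarrow> control_traj \<Rightarrow> nat \<Rightarrow> real \<Rightarrow> real" where
  "eff_control N p i t = fst p t i * mean N (snd p t)"

definition mid_pair :: "nat \<Rightarrow> control_traj \<Rightarrow> control_traj \<Rightarrow> control_traj" where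
  "mid_pair N p q = (mid_control N (fst p) (snd p) (fst q) (snd q), mid_traj (snd p) (snd q))"

lemma feasible_mid_pair:
  assumes "mean N \<xi>0 \<ge> 0" "feasible N T \<xi>0 p" "feasible N T \<xi>0 q"
  shows "feasible N T \<xi>0 (mid_pair N p q)"
  using assms admissible_mid_control is_traj_mid_traj by (simp add: feasible_def mid_pair_def)

lemma eff_control_mid_pair:
  assumes m0: "mean N \<xi>0 \<ge> 0" and p: "feasible N T \<xi>0 p" and q: "feasible N T \<xi>0 q"
    and t: "t \<in> {0..T}"
  shows "eff_control N (mid_pair N p q) i t = (eff_control N p i t + eff_control N q i t) / 2"
proof -
  have "0 \<le> mean N (snd p t)" "0 \<le> mean N (snd q t)"
    using mean_traj_nonneg[OF _ _ m0 t] p q by (auto simp: feasible_def)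
  then show ?thesis by (simp add: eff_control_def mid_pair_def mid_control_mult_mean)
qed

lemma eff_control_measurable:
  assumes "feasible N T \<xi>0 p" "i < N"
  shows "eff_control N p i \<in> borel_measurable (lebesgue_on {0..T})"
proof -
  have [measurable]: "(\<lambda>t. fst p t i) \<in> borel_measurable (lebesgue_on {0..T})"
    "(\<lambda>t. mean N (snd p t)) \<in> borel_measurable (lebesgue_on {0..T})"
    using admissible_measurable is_traj_measurable_mean assms unfolding feasible_def by blast+
  show ?thesis unfolding eff_control_def by measurable
qed

lemma eff_control_bounds:
  assumes m0: "mean N \<xi>0 \<ge> 0" and p: "feasible N T \<xi>0 p" and t: "t \<in> {0..T}"
  shows "\<And>i. i < N \<Longrightarrow> 0 \<le> eff_control N p i t"
    and "(\<Sum>i<N. eff_control N p i t) \<le> mean N (snd p t)"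
    and "\<And>i. i < N \<Longrightarrow> eff_control N p i t \<le> mean N \<xi>0"
    and "(\<Sum>i<N. (eff_control N p i t)\<^sup>2) \<le> (mean N \<xi>0)\<^sup>2"
proof -
  have adm: "admissible N T (fst p)" and tr: "is_traj N T \<xi>0 (fst p) (snd p)"
    using p by (auto simp: feasible_def)
  note m = mean_traj_nonneg[OF tr adm m0 t] mean_traj_le_initial[OF tr adm m0 t]
  show nonneg: "\<And>i. i < N \<Longrightarrow> 0 \<le> eff_control N p i t"
    unfolding eff_control_def using admissibleD(1)[OF adm t] m by auto
  have "(\<Sum>i<N. eff_control N p i t) = (\<Sum>i<N. fst p t i) * mean N (snd p t)"
    by (simp add: eff_control_def sum_distrib_right)
  also have "\<dots> \<le> 1 * mean N (snd p t)"
    using admissibleD(3)[OF adm t] m by (intro mult_right_mono) auto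
  finally show sum_le: "(\<Sum>i<N. eff_control N p i t) \<le> mean N (snd p t)" by simp
  then have sum_le0: "(\<Sum>i<N. eff_control N p i t) \<le> mean N \<xi>0" using m by linarith
  show le: "eff_control N p i t \<le> mean N \<xi>0" if i: "i < N" for i
  proof -
    have "eff_control N p i t \<le> (\<Sum>i<N. eff_control N p i t)"
      by (rule member_le_sum) (use i nonneg in auto)
    then show ?thesis using sum_le0 by linarith
  qed
  have "(\<Sum>i<N. (eff_control N p i t)\<^sup>2) \<le> (\<Sum>i<N. mean N \<xi>0 * eff_control N p i t)"
    unfolding power2_eq_square by (intro sum_mono mult_right_mono) (use le nonneg in auto)
  also have "\<dots> \<le> mean N \<xi>0 * mean N \<xi>0"
    using sum_le0 m0 by (simp add: sum_distrib_left[symmetric] mult_left_mono)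
  finally show "(\<Sum>i<N. (eff_control N p i t)\<^sup>2) \<le> (mean N \<xi>0)\<^sup>2" by (simp add: power2_eq_square)
qed

lemma bounded_measurable_integrable:
  fixes f :: "real \<Rightarrow> real"
  assumes f: "f \<in> borel_measurable (lebesgue_on {a..b})" and B: "\<And>t. t \<in> {a..b} \<Longrightarrow> \<bar>f t\<bar> \<le> B"
  shows "integrable (lebesgue_on {a..b}) f" and "f integrable_on {a..b}"
proof -
  have "f absolutely_integrable_on {a..b}"
    by (rule measurable_bounded_by_integrable_imp_absolutely_integrable[OF f, where g = "\<lambda>_. B"])
      (use B in auto)
  then show "integrable (lebesgue_on {a..b}) f" "f integrable_on {a..b}"
    by (auto intro: absolutely_integrable_imp_integrable simp: absolutely_integrable_on_def)
qed

lemma integrable_eff_control_square: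
  assumes m0: "mean N \<xi>0 \<ge> 0" and p: "feasible N T \<xi>0 p" and q: "feasible N T \<xi>0 q"
  shows "(\<lambda>t. \<Sum>i<N. (eff_control N p i t)\<^sup>2) integrable_on {0..T}"
    and "(\<lambda>t. \<Sum>i<N. (eff_control N p i t - eff_control N q i t)\<^sup>2) integrable_on {0..T}"
proof -
  have [measurable]: "eff_control N p i \<in> borel_measurable (lebesgue_on {0..T})"
    "eff_control N q i \<in> borel_measurable (lebesgue_on {0..T})" if "i < N" for i
    using eff_control_measurable[OF p that] eff_control_measurable[OF q that] .
  show "(\<lambda>t. \<Sum>i<N. (eff_control N p i t)\<^sup>2) integrable_on {0..T}"
  proof (rule bounded_measurable_integrable(2))
    show "(\<lambda>t. \<Sum>i<N. (eff_control N p i t)\<^sup>2) \<in> borel_measurable (lebesgue_on {0..T})"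
      by (rule borel_measurable_sum) measurable
    fix t assume "t \<in> {0..T}"
    then show "\<bar>\<Sum>i<N. (eff_control N p i t)\<^sup>2\<bar> \<le> (mean N \<xi>0)\<^sup>2"
      using eff_control_bounds(4)[OF m0 p] by (simp add: sum_nonneg)
  qed
  show "(\<lambda>t. \<Sum>i<N. (eff_control N p i t - eff_control N q i t)\<^sup>2) integrable_on {0..T}"
  proof (rule bounded_measurable_integrable(2))
    show "(\<lambda>t. \<Sum>i<N. (eff_control N p i t - eff_control N q i t)\<^sup>2) \<in> borel_measurable (lebesgue_on {0..T})"
      by (rule borel_measurable_sum) measurable
    fix t assume t: "t \<in> {0..T}"
    have "(\<Sum>i<N. (eff_control N p i t - eff_control N q i t)\<^sup>2) \<le> (\<Sum>i<N. (mean N \<xi>0)\<^sup>2)"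
    proof (rule sum_mono)
      fix i assume "i \<in> {..<N}"
      then have "\<bar>eff_control N p i t - eff_control N q i t\<bar> \<le> \<bar>mean N \<xi>0\<bar>"
        using eff_control_bounds(1,3)[OF m0 p t] eff_control_bounds(1,3)[OF m0 q t] by fastforce
      then show "(eff_control N p i t - eff_control N q i t)\<^sup>2 \<le> (mean N \<xi>0)\<^sup>2"
        by (simp add: abs_le_square_iff)
    qed
    then show "\<bar>\<Sum>i<N. (eff_control N p i t - eff_control N q i t)\<^sup>2\<bar> \<le> real N * (mean N \<xi>0)\<^sup>2"
      by (simp add: sum_nonneg)
  qed
qed

definition eff_energy :: "nat \<Rightarrow> real \<Rightarrow> control_traj \<Rightarrow> real" where
  "eff_energy N T p = integral {0..T} (\<lambda>t. \<Sum>i<N. (eff_control N p i t)\<^sup>2)"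

definition eff_dist :: "nat \<Rightarrow> real \<Rightarrow> control_traj \<Rightarrow> control_traj \<Rightarrow> real" where
  "eff_dist N T p q = integral {0..T} (\<lambda>t. \<Sum>i<N. (eff_control N p i t - eff_control N q i t)\<^sup>2)"

lemma eff_dist_commute: "eff_dist N T p q = eff_dist N T q p"
  unfolding eff_dist_def by (simp add: power2_commute)

lemma eff_dist_eq_energy_mid_pair:
  assumes m0: "mean N \<xi>0 \<ge> 0" and p: "feasible N T \<xi>0 p" and q: "feasible N T \<xi>0 q"
  shows "eff_dist N T p q = 2 * eff_energy N T p + 2 * eff_energy N T q - 4 * eff_energy N T (mid_pair N p q)"
proof -
  note ip = integrable_eff_control_square(1)[OF m0 p p] and iq = integrable_eff_control_square(1)[OF m0 q q]
  let ?u = "eff_control N p" and ?v = "eff_control N q"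
  have "(\<Sum>i<N. (?u i t - ?v i t)\<^sup>2)
      = 2 * (\<Sum>i<N. (?u i t)\<^sup>2) + 2 * (\<Sum>i<N. (?v i t)\<^sup>2) - 4 * (\<Sum>i<N. (eff_control N (mid_pair N p q) i t)\<^sup>2)"
    if t: "t \<in> {0..T}" for t
  proof -
    have "(\<Sum>i<N. (?u i t - ?v i t)\<^sup>2)
        = (\<Sum>i<N. 2 * (?u i t)\<^sup>2 + 2 * (?v i t)\<^sup>2 - 4 * (eff_control N (mid_pair N p q) i t)\<^sup>2)"
      by (rule sum.cong) (auto simp: eff_control_mid_pair[OF m0 p q t] power2_eq_square field_simps)
    then show ?thesis by (simp add: sum_subtractf sum_distrib_left sum.distrib)
  qed
  then have "eff_dist N T p q = integral {0..T} (\<lambda>t. 2 * (\<Sum>i<N. (?u i t)\<^sup>2) + 2 * (\<Sum>i<N. (?v i t)\<^sup>2)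
      - 4 * (\<Sum>i<N. (eff_control N (mid_pair N p q) i t)\<^sup>2))"
    unfolding eff_dist_def by (intro integral_cong) auto
  also have "\<dots> = 2 * eff_energy N T p + 2 * eff_energy N T q - 4 * eff_energy N T (mid_pair N p q)"
    using ip iq integrable_eff_control_square(1)[OF m0 feasible_mid_pair[OF m0 p q] p]
    unfolding eff_energy_def by (simp add: integral_diff integral_add integrable_add integrable_diff)
  finally show ?thesis .
qed

lemma eff_energy_bounds:
  assumes m0: "mean N \<xi>0 \<ge> 0" and T: "T \<ge> 0" and p: "feasible N T \<xi>0 p"
  shows "0 \<le> eff_energy N T p" "eff_energy N T p \<le> T * (mean N \<xi>0)\<^sup>2"
proof -
  note ip = integrable_eff_control_square(1)[OF m0 p p]
  show "0 \<le> eff_energy N T p" unfolding eff_energy_def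
    by (rule Henstock_Kurzweil_Integration.integral_nonneg[OF ip]) (simp add: sum_nonneg)
  have "eff_energy N T p \<le> integral {0..T} (\<lambda>t. (mean N \<xi>0)\<^sup>2)" unfolding eff_energy_def
    by (rule integral_le[OF ip]) (use eff_control_bounds(4)[OF m0 p] in auto)
  then show "eff_energy N T p \<le> T * (mean N \<xi>0)\<^sup>2" using T by simp
qed

text \<open>From \<open>\<bar>x\<bar> \<le> d + x\<^sup>2 / d\<close>: a small \<open>eff_dist\<close> forces the effective controls to be \<open>L\<^sup>1\<close>-close.\<close>
lemma L1_dist_eff_control_le:
  assumes m0: "mean N \<xi>0 \<ge> 0" and T: "T \<ge> 0" and p: "feasible N T \<xi>0 p" and q: "feasible N T \<xi>0 q"
    and i: "i < N" and d: "d > 0"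
  shows "integral\<^sup>L (lebesgue_on {0..T}) (\<lambda>t. norm (eff_control N p i t - eff_control N q i t))
    \<le> d * T + eff_dist N T p q / d"
proof -
  let ?x = "\<lambda>t. eff_control N p i t - eff_control N q i t"
  have [measurable]: "eff_control N p i \<in> borel_measurable (lebesgue_on {0..T})"
    "eff_control N q i \<in> borel_measurable (lebesgue_on {0..T})"
    using eff_control_measurable[OF p i] eff_control_measurable[OF q i] .
  have mf: "(\<lambda>t. norm (?x t)) \<in> borel_measurable (lebesgue_on {0..T})" by measurable
  have bd: "\<bar>norm (?x t)\<bar> \<le> 2 * mean N \<xi>0" if "t \<in> {0..T}" for t
    using eff_control_bounds(1,3)[OF m0 p that i] eff_control_bounds(1,3)[OF m0 q that i] by auto
  note int = bounded_measurable_integrable[OF mf bd]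
  note id = integrable_eff_control_square(2)[OF m0 p q]
  have "integral\<^sup>L (lebesgue_on {0..T}) (\<lambda>t. norm (?x t)) = integral {0..T} (\<lambda>t. norm (?x t))"
    by (rule lebesgue_integral_eq_integral[OF int(1)]) auto
  also have "\<dots> \<le> integral {0..T} (\<lambda>t. d + (\<Sum>j<N. (eff_control N p j t - eff_control N q j t)\<^sup>2) / d)"
  proof (rule integral_le[OF int(2)])
    show "(\<lambda>t. d + (\<Sum>j<N. (eff_control N p j t - eff_control N q j t)\<^sup>2) / d) integrable_on {0..T}"
      using id by (intro integrable_add integrable_on_divide) auto
    fix t assume t: "t \<in> {0..T}"
    have "(?x t)\<^sup>2 \<le> (\<Sum>j<N. (eff_control N p j t - eff_control N q j t)\<^sup>2)"
      using i by (intro member_le_sum[where f = "\<lambda>j. (eff_control N p j t - eff_control N q j t)\<^sup>2"]) auto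
    moreover have "\<bar>?x t\<bar> \<le> d + (?x t)\<^sup>2 / d"
    proof (cases "\<bar>?x t\<bar> \<le> d")
      case True
      then show ?thesis using d by (simp add: add_increasing2)
    next
      case False
      then have "\<bar>?x t\<bar> * d \<le> \<bar>?x t\<bar> * \<bar>?x t\<bar>" using d by (intro mult_left_mono) auto
      then show ?thesis using d by (simp add: le_divide_eq power2_eq_square add_increasing)
    qed
    ultimately show "norm (?x t) \<le> d + (\<Sum>j<N. (eff_control N p j t - eff_control N q j t)\<^sup>2) / d"
      using d by (simp add: divide_right_mono order_trans)
  qed
  also have "\<dots> = d * T + eff_dist N T p q / d"
    using T integral_add[OF integrable_const_ivl integrable_on_divide[OF id]] unfolding eff_dist_def by simp
  finally show ?thesis .
qed

lemma feasible_zero_control: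
  "feasible N T \<xi>0 (\<lambda>t i. 0, \<lambda>t i. mean N \<xi>0 + (\<xi>0 i - mean N \<xi>0) * exp (- t))"
proof -
  let ?c = "mean N \<xi>0"
  let ?x = "\<lambda>t i. ?c + (\<xi>0 i - ?c) * exp (- t)"
  have mean_x: "mean N (?x t) = ?c" for t
  proof -
    have "(\<Sum>i<N. ?x t i) = real N * ?c + ((\<Sum>i<N. \<xi>0 i) - real N * ?c) * exp (- t)"
      by (simp add: sum.distrib sum_distrib_right[symmetric] sum_subtractf)
    then show ?thesis
      by (cases "N = 0") (simp add: mean_def, simp add: mean_def[of N "?x t"] sum_eq_mean[where x = \<xi>0])
  qed
  have "is_traj N T \<xi>0 (\<lambda>t i. 0) ?x"
    unfolding is_traj_def
  proof (intro conjI allI impI ballI)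
    fix i assume i: "i < N"
    show "continuous_on {0..T} (\<lambda>t. ?x t i)" by (intro continuous_intros)
    fix t assume t: "t \<in> {0..T}"
    have "((\<lambda>s. - (\<xi>0 i - ?c) * exp (- s)) has_integral ((\<xi>0 i - ?c) * exp (- t) - (\<xi>0 i - ?c) * exp (- 0))) {0..t}"
    proof (rule fundamental_theorem_of_calculus)
      show "0 \<le> t" using t by auto
      fix s assume "s \<in> {0..t}"
      show "((\<lambda>s. (\<xi>0 i - ?c) * exp (- s)) has_vector_derivative - (\<xi>0 i - ?c) * exp (- s)) (at s within {0..t})"
        by (auto intro!: derivative_eq_intros simp: algebra_simps
            simp flip: has_real_derivative_iff_has_vector_derivative)
    qed
    then show "((\<lambda>s. - ?x s i + (1 - 0) * mean N (?x s)) has_integral (?x t i - \<xi>0 i)) {0..t}"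
      unfolding mean_x by (simp add: algebra_simps)
  qed
  then show ?thesis unfolding feasible_def admissible_def by simp
qed

definition min_cost :: "nat \<Rightarrow> real \<Rightarrow> (nat \<Rightarrow> real) \<Rightarrow> real" where
  "min_cost N T \<xi>0 = Inf ((\<lambda>p. cost N T (snd p)) ` Collect (feasible N T \<xi>0))"

lemma bdd_below_feasible_cost: "bdd_below ((\<lambda>p. cost N T (snd p)) ` Collect (feasible N T \<xi>0))"
  unfolding bdd_below_def feasible_def using cost_nonneg by blast

lemma min_cost_le:
  assumes "feasible N T \<xi>0 p"
  shows "min_cost N T \<xi>0 \<le> cost N T (snd p)"
  unfolding min_cost_def by (rule cInf_lower[OF _ bdd_below_feasible_cost]) (use assms in auto)

lemma exists_near_optimal:
  assumes "e > 0"
  obtains p where "feasible N T \<xi>0 p" "cost N T (snd p) < min_cost N T \<xi>0 + e"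
proof -
  have "Collect (feasible N T \<xi>0) \<noteq> {}" using feasible_zero_control by blast
  moreover have "min_cost N T \<xi>0 < min_cost N T \<xi>0 + e" using assms by simp
  ultimately obtain x where "x \<in> (\<lambda>p. cost N T (snd p)) ` Collect (feasible N T \<xi>0)"
    "x < min_cost N T \<xi>0 + e"
    using cInf_less_iff[OF _ bdd_below_feasible_cost] unfolding min_cost_def by blast
  then show ?thesis using that by blast
qed

lemma cost_mid_pair_le:
  assumes p: "feasible N T \<xi>0 p" and q: "feasible N T \<xi>0 q"
    and "cost N T (snd p) \<le> c" "cost N T (snd q) \<le> c"
  shows "cost N T (snd (mid_pair N p q)) \<le> c"
proof -
  have tr: "is_traj N T \<xi>0 (fst p) (snd p)" "is_traj N T \<xi>0 (fst q) (snd q)"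
    using p q by (auto simp: feasible_def)
  have "0 \<le> integral {0..T} (\<lambda>t. Vfun N (\<lambda>i. snd p t i - snd q t i))"
    by (rule Henstock_Kurzweil_Integration.integral_nonneg[OF integrable_Vfun_traj_diff[OF tr]])
      (simp add: Vfun_nonneg)
  moreover have "cost N T (snd (mid_pair N p q)) = (cost N T (snd p) + cost N T (snd q)) / 2
      - integral {0..T} (\<lambda>t. Vfun N (\<lambda>i. snd p t i - snd q t i)) / 4"
    by (simp add: mid_pair_def cost_mid_traj[OF tr])
  ultimately show ?thesis using assms(3,4) by (simp add: field_simps)
qed

lemma small_of_Cauchy_bound:
  fixes D :: "nat \<Rightarrow> nat \<Rightarrow> real" and q :: "nat \<Rightarrow> real"
  assumes q: "Cauchy q" and c: "c > 0" and sym: "\<And>n k. D n k = D k n"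
    and bound: "\<And>n k. n \<le> k \<Longrightarrow> D n k \<le> c * (q k - q n) + c / real (Suc n)"
    and e: "e > 0"
  shows "\<exists>M. \<forall>n\<ge>M. \<forall>k\<ge>M. D n k < e"
proof -
  have e': "e / (2 * c) > 0" using e c by simp
  obtain M1 where M1: "\<And>n k. n \<ge> M1 \<Longrightarrow> k \<ge> M1 \<Longrightarrow> q k - q n < e / (2 * c)"
    using q e' unfolding Cauchy_def dist_real_def by (meson abs_less_iff)
  obtain M2 where M2: "M2 > 0" "inverse (real M2) < e / (2 * c)"
    using ex_inverse_of_nat_less[OF e'] by blast
  have small: "D n k < e" if "max M1 M2 \<le> n" "n \<le> k" for n k
  proof -
    have "1 / real (Suc n) \<le> inverse (real M2)"
      using that M2(1) by (simp add: inverse_eq_divide frac_le)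
    then have "c * (q k - q n) + c * (1 / real (Suc n)) < c * (e / (2 * c)) + c * (e / (2 * c))"
      using M1[of n k] M2(2) that c by (intro add_strict_mono mult_strict_left_mono) auto
    then show ?thesis using bound[OF that(2)] c by simp
  qed
  show ?thesis
    by (rule exI[of _ "max M1 M2"]) (metis nle_le order_trans small sym)
qed

text \<open>\<open>P n\<close> nearly minimises \<open>eff_energy\<close> over the cost sublevel set \<open>F n\<close>, which is closed under
  \<open>mid_pair\<close>; the parallelogram law then bounds \<open>eff_dist (P n) (P k)\<close> by the increments of the
  increasing bounded infima \<open>q\<close>.\<close>
lemma exists_minimizing_seq_eff_cauchy:
  assumes m0: "mean N \<xi>0 \<ge> 0" and T: "T \<ge> 0"
  obtains P where "\<And>n. feasible N T \<xi>0 (P n)"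
    "\<And>n. cost N T (snd (P n)) \<le> min_cost N T \<xi>0 + 1 / real (Suc n)"
    "\<And>e. e > 0 \<Longrightarrow> \<exists>M. \<forall>n\<ge>M. \<forall>k\<ge>M. eff_dist N T (P n) (P k) < e"
proof -
  define F where "F n = {p. feasible N T \<xi>0 p \<and> cost N T (snd p) \<le> min_cost N T \<xi>0 + 1 / real (Suc n)}" for n
  have F_ne: "F n \<noteq> {}" for n
  proof -
    obtain p where "feasible N T \<xi>0 p" "cost N T (snd p) < min_cost N T \<xi>0 + 1 / real (Suc n)"
      using exists_near_optimal[of "1 / real (Suc n)" N T \<xi>0] by (metis of_nat_0_less_iff zero_less_Suc zero_less_divide_1_iff)
    then show ?thesis unfolding F_def by fastforce
  qed
  have F_antimono: "F k \<subseteq> F n" if "n \<le> k" for n k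
    using that unfolding F_def by (auto intro: order_trans frac_le simp: frac_le)
  have bdd: "bdd_below (eff_energy N T ` F n)" for n
    using eff_energy_bounds(1)[OF m0 T] unfolding F_def bdd_below_def by blast
  define q where "q n = Inf (eff_energy N T ` F n)" for n
  have q_le: "q n \<le> eff_energy N T p" if "p \<in> F n" for p n
    unfolding q_def by (rule cInf_lower[OF _ bdd]) (use that in auto)
  have "\<exists>p. p \<in> F n \<and> eff_energy N T p < q n + 1 / real (Suc n)" for n
    using cInf_less_iff[OF _ bdd, of n "q n + 1 / real (Suc n)"] F_ne unfolding q_def by auto
  then obtain P where P: "\<And>n. P n \<in> F n" "\<And>n. eff_energy N T (P n) < q n + 1 / real (Suc n)"
    by metis
  have feas: "feasible N T \<xi>0 (P n)" for n using P(1) by (simp add: F_def)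
  have "incseq q"
    unfolding incseq_def q_def
    by (intro allI impI cInf_superset_mono) (use F_antimono F_ne bdd in \<open>auto intro: image_mono\<close>)
  moreover have "q n \<le> T * (mean N \<xi>0)\<^sup>2" for n
    using q_le[OF P(1)] eff_energy_bounds(2)[OF m0 T feas] order_trans by blast
  ultimately have "Cauchy q"
    using LIMSEQ_incseq_SUP LIMSEQ_imp_Cauchy by (metis bdd_aboveI2)
  have "eff_dist N T (P n) (P k) \<le> 4 * (q k - q n) + 4 / real (Suc n)" if nk: "n \<le> k" for n k
  proof -
    have "P k \<in> F n" using F_antimono[OF nk] P(1) by blast
    then have "mid_pair N (P n) (P k) \<in> F n"
      using P(1)[of n] feasible_mid_pair[OF m0] cost_mid_pair_le unfolding F_def by blast
    then have "q n \<le> eff_energy N T (mid_pair N (P n) (P k))" by (rule q_le)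
    moreover have "1 / real (Suc k) \<le> 1 / real (Suc n)" using nk by (simp add: frac_le)
    moreover have "q n \<le> q k" using \<open>incseq q\<close> nk by (simp add: incseq_def)
    ultimately have "eff_dist N T (P n) (P k) \<le> 4 * (q k - q n) + 4 * (1 / real (Suc n))"
      using P(2)[of n] P(2)[of k] eff_dist_eq_energy_mid_pair[OF m0 feas[of n] feas[of k]] by argo
    then show ?thesis by simp
  qed
  then show ?thesis
    using that feas P(1) small_of_Cauchy_bound[OF \<open>Cauchy q\<close>, of 4 "\<lambda>n k. eff_dist N T (P n) (P k)"]
      eff_dist_commute unfolding F_def by auto
qed

locale limit_of_feasible =
  fixes N :: nat and T :: real and \<xi>0 :: "nat \<Rightarrow> real"
    and P :: "nat \<Rightarrow> control_traj" and G :: "nat \<Rightarrow> real \<Rightarrow> real"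
  assumes m0: "mean N \<xi>0 \<ge> 0"
    and P_feasible: "\<And>n. feasible N T \<xi>0 (P n)"
    and G_continuous: "\<And>i. i < N \<Longrightarrow> continuous_on {0..T} (G i)"
    and traj_tendsto: "\<And>i t. i < N \<Longrightarrow> t \<in> {0..T} \<Longrightarrow> (\<lambda>n. snd (P n) t i) \<longlonglongrightarrow> G i t"
    and AE_eff_Cauchy: "AE t in lebesgue_on {0..T}. \<forall>i\<in>{..<N}. Cauchy (\<lambda>n. eff_control N (P n) i t)"
begin

definition lim_traj :: "real \<Rightarrow> nat \<Rightarrow> real" where
  "lim_traj t i = G i t"

definition lim_eff :: "nat \<Rightarrow> real \<Rightarrow> real" where
  "lim_eff i t = lim (\<lambda>n. eff_control N (P n) i t)"

text \<open>Off the null set where the effective controls fail to converge, \<open>lim_eff\<close> has nonnegative entries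
  with sum at most \<open>mean (lim_traj t)\<close>, and \<open>lim_control\<close> is just \<open>lim_eff / mean\<close>; the clipping by \<open>max\<close>
  keeps it admissible everywhere.\<close>
definition lim_control :: "real \<Rightarrow> nat \<Rightarrow> real" where
  "lim_control t i = max 0 (lim_eff i t) / max (mean N (lim_traj t)) (\<Sum>k<N. max 0 (lim_eff k t))"

lemma P_admissible: "admissible N T (fst (P n))" and P_is_traj: "is_traj N T \<xi>0 (fst (P n)) (snd (P n))"
  using P_feasible[of n] by (auto simp: feasible_def)

lemma mean_tendsto: "t \<in> {0..T} \<Longrightarrow> (\<lambda>n. mean N (snd (P n) t)) \<longlonglongrightarrow> mean N (lim_traj t)"
  unfolding mean_def lim_traj_def by (intro tendsto_intros) (use traj_tendsto in auto)

lemma continuous_on_mean_lim_traj: "continuous_on {0..T} (\<lambda>t. mean N (lim_traj t))"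
  unfolding mean_def lim_traj_def by (intro continuous_intros) (use G_continuous in auto)

lemma eff_tendsto:
  assumes "Cauchy (\<lambda>n. eff_control N (P n) i t)"
  shows "(\<lambda>n. eff_control N (P n) i t) \<longlonglongrightarrow> lim_eff i t"
  using assms unfolding lim_eff_def by (simp add: Cauchy_convergent_iff convergent_LIMSEQ_iff)

lemma lim_eff_bounds:
  assumes t: "t \<in> {0..T}" and c: "\<forall>i\<in>{..<N}. Cauchy (\<lambda>n. eff_control N (P n) i t)"
  shows "\<And>i. i < N \<Longrightarrow> 0 \<le> lim_eff i t" and "(\<Sum>i<N. lim_eff i t) \<le> mean N (lim_traj t)"
proof -
  show "\<And>i. i < N \<Longrightarrow> 0 \<le> lim_eff i t"
    by (rule LIMSEQ_le_const[OF eff_tendsto]) (use c eff_control_bounds(1)[OF m0 P_feasible t] in auto)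
  have "(\<lambda>n. \<Sum>i<N. eff_control N (P n) i t) \<longlonglongrightarrow> (\<Sum>i<N. lim_eff i t)"
    by (intro tendsto_sum eff_tendsto) (use c in auto)
  then show "(\<Sum>i<N. lim_eff i t) \<le> mean N (lim_traj t)"
    by (rule LIMSEQ_le[OF _ mean_tendsto[OF t]]) (use eff_control_bounds(2)[OF m0 P_feasible t] in auto)
qed

lemma lim_control_mult_mean:
  assumes t: "t \<in> {0..T}" and c: "\<forall>i\<in>{..<N}. Cauchy (\<lambda>n. eff_control N (P n) i t)" and i: "i < N"
  shows "lim_control t i * mean N (lim_traj t) = lim_eff i t"
proof -
  note bounds = lim_eff_bounds[OF t c]
  have "(\<Sum>k<N. max 0 (lim_eff k t)) = (\<Sum>k<N. lim_eff k t)"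
    by (rule sum.cong) (use bounds(1) in auto)
  then have denom: "max (mean N (lim_traj t)) (\<Sum>k<N. max 0 (lim_eff k t)) = mean N (lim_traj t)"
    using bounds(2) by simp
  show ?thesis
  proof (cases "mean N (lim_traj t) = 0")
    case True
    then have "(\<Sum>k<N. lim_eff k t) = 0" using bounds by (metis antisym sum_nonneg lessThan_iff)
    then have "lim_eff i t = 0" using bounds(1) i by (subst (asm) sum_nonneg_eq_0_iff) auto
    then show ?thesis using True by simp
  next
    case False
    then show ?thesis using bounds(1)[OF i] by (simp add: lim_control_def denom)
  qed
qed

lemma lim_eff_measurable: "i < N \<Longrightarrow> lim_eff i \<in> borel_measurable (lebesgue_on {0..T})"
  unfolding lim_eff_def by (intro borel_measurable_lim_metric eff_control_measurable[OF P_feasible])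

lemma admissible_lim_control: "admissible N T lim_control"
  unfolding admissible_def
proof (intro conjI allI impI ballI)
  fix i assume "i < N"
  have [measurable]: "(\<lambda>t. mean N (lim_traj t)) \<in> borel_measurable (lebesgue_on {0..T})"
    by (rule continuous_imp_measurable_on_sets_lebesgue[OF continuous_on_mean_lim_traj]) auto
  have [measurable]: "lim_eff k \<in> borel_measurable (lebesgue_on {0..T})" if "k < N" for k
    using lim_eff_measurable[OF that] .
  have [measurable]: "(\<lambda>t. \<Sum>k<N. max 0 (lim_eff k t)) \<in> borel_measurable (lebesgue_on {0..T})"
    by (rule borel_measurable_sum) measurable
  show "(\<lambda>t. lim_control t i) \<in> borel_measurable (lebesgue_on {0..T})"
    unfolding lim_control_def using \<open>i < N\<close> by measurable
next
  fix t i assume "t \<in> {0..T}" "i < N"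
  have "max 0 (lim_eff i t) \<le> (\<Sum>k<N. max 0 (lim_eff k t))"
    using \<open>i < N\<close> by (intro member_le_sum[where f = "\<lambda>k. max 0 (lim_eff k t)"]) auto
  moreover have "0 \<le> (\<Sum>k<N. max 0 (lim_eff k t))" by (simp add: sum_nonneg)
  ultimately show "0 \<le> lim_control t i" "lim_control t i \<le> 1"
    unfolding lim_control_def by (auto simp: divide_le_eq_1 intro!: divide_nonneg_nonneg)
next
  fix t assume "t \<in> {0..T}"
  have "(\<Sum>i<N. lim_control t i) = (\<Sum>k<N. max 0 (lim_eff k t)) / max (mean N (lim_traj t)) (\<Sum>k<N. max 0 (lim_eff k t))"
    unfolding lim_control_def by (simp add: sum_divide_distrib)
  moreover have "0 \<le> (\<Sum>k<N. max 0 (lim_eff k t))" by (simp add: sum_nonneg)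
  ultimately show "(\<Sum>i<N. lim_control t i) \<le> 1" by (auto simp: divide_le_eq_1)
qed


lemma traj_rhs_eq: "traj_rhs N (fst (P n)) (snd (P n)) i s = - snd (P n) s i + mean N (snd (P n) s) - eff_control N (P n) i s"
  by (simp add: traj_rhs_def eff_control_def algebra_simps)

text \<open>Dominated convergence in the integral equation, using the uniform bound on the right-hand sides.\<close>
lemma lim_traj_has_integral:
  assumes i: "i < N" and t: "t \<in> {0..T}"
  shows "((\<lambda>s. - lim_traj s i + (1 - lim_control s i) * mean N (lim_traj s)) has_integral (lim_traj t i - \<xi>0 i)) {0..t}"
proof -
  let ?M = "lebesgue_on {0..t}"
  let ?f = "\<lambda>s. - lim_traj s i + (1 - lim_control s i) * mean N (lim_traj s)"
  let ?s = "\<lambda>n. traj_rhs N (fst (P n)) (snd (P n)) i"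
  have sub: "{0..t} \<subseteq> {0..T}" using t by auto
  have [measurable]: "(\<lambda>s. mean N (lim_traj s)) \<in> borel_measurable (lebesgue_on {0..T})"
    by (rule continuous_imp_measurable_on_sets_lebesgue[OF continuous_on_mean_lim_traj]) auto
  have [measurable]: "(\<lambda>s. lim_traj s i) \<in> borel_measurable (lebesgue_on {0..T})"
    unfolding lim_traj_def by (rule continuous_imp_measurable_on_sets_lebesgue[OF G_continuous[OF i]]) auto
  have [measurable]: "(\<lambda>s. lim_control s i) \<in> borel_measurable (lebesgue_on {0..T})"
    by (rule admissible_measurable[OF admissible_lim_control i])
  have f_meas: "?f \<in> borel_measurable ?M"
    by (rule measurable_restrict_mono[OF _ sub]) measurable
  have s_meas: "?s n \<in> borel_measurable ?M" for n
  proof -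
    have [measurable]: "(\<lambda>s. snd (P n) s i) \<in> borel_measurable (lebesgue_on {0..T})"
      by (rule continuous_imp_measurable_on_sets_lebesgue[OF is_traj_continuous[OF P_is_traj i]]) auto
    have [measurable]: "(\<lambda>s. mean N (snd (P n) s)) \<in> borel_measurable (lebesgue_on {0..T})"
      by (rule is_traj_measurable_mean[OF P_is_traj])
    have [measurable]: "(\<lambda>s. fst (P n) s i) \<in> borel_measurable (lebesgue_on {0..T})"
      by (rule admissible_measurable[OF P_admissible i])
    show ?thesis unfolding traj_rhs_def by (rule measurable_restrict_mono[OF _ sub]) measurable
  qed
  have lim: "AE s in ?M. (\<lambda>n. ?s n s) \<longlonglongrightarrow> ?f s"
  proof -
    have "AE s in lebesgue. s \<in> {0..T} \<longrightarrow> (\<forall>i\<in>{..<N}. Cauchy (\<lambda>n. eff_control N (P n) i s))"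
      using AE_eff_Cauchy by (subst (asm) AE_restrict_space_iff) auto
    then have "AE s in lebesgue. s \<in> {0..t} \<longrightarrow> (\<lambda>n. ?s n s) \<longlonglongrightarrow> ?f s"
    proof (rule AE_mp, intro AE_I2 impI)
      fix s assume c: "s \<in> {0..T} \<longrightarrow> (\<forall>i\<in>{..<N}. Cauchy (\<lambda>n. eff_control N (P n) i s))" and "s \<in> {0..t}"
      then have sT: "s \<in> {0..T}" and c: "\<forall>i\<in>{..<N}. Cauchy (\<lambda>n. eff_control N (P n) i s)" using sub by auto
      have "(\<lambda>n. - snd (P n) s i + mean N (snd (P n) s) - eff_control N (P n) i s)
          \<longlonglongrightarrow> - lim_traj s i + mean N (lim_traj s) - lim_eff i s"
        using traj_tendsto[OF i sT] mean_tendsto[OF sT] eff_tendsto c i unfolding lim_traj_def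
        by (intro tendsto_intros) auto
      then show "(\<lambda>n. ?s n s) \<longlonglongrightarrow> ?f s"
        unfolding traj_rhs_eq using lim_control_mult_mean[OF sT c i] by (simp add: algebra_simps)
    qed
    then show ?thesis by (subst AE_restrict_space_iff) auto
  qed
  have bound: "AE s in ?M. norm (?s n s) \<le> 2 * traj_bound N \<xi>0" for n
    by (rule AE_I2) (use sub traj_rhs_abs_le[OF P_is_traj P_admissible m0 i] in auto)
  have dominating: "integrable ?M (\<lambda>_. 2 * traj_bound N \<xi>0)" by simp
  note dc = integrable_dominated_convergence[OF f_meas s_meas dominating lim bound]
    integrable_dominated_convergence2[OF f_meas s_meas dominating lim bound]
    integral_dominated_convergence[OF f_meas s_meas dominating lim bound]
  have "integral\<^sup>L ?M (?s n) = snd (P n) t i - \<xi>0 i" for n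
    using lebesgue_integral_eq_integral[OF dc(2)] integral_unique[OF is_traj_has_integral[OF P_is_traj i t]] by simp
  then have "(\<lambda>n. integral\<^sup>L ?M (?s n)) \<longlonglongrightarrow> lim_traj t i - \<xi>0 i"
    unfolding lim_traj_def using traj_tendsto[OF i t] by (simp add: tendsto_diff)
  then have "integral\<^sup>L ?M ?f = lim_traj t i - \<xi>0 i" using dc(3) LIMSEQ_unique by blast
  then show ?thesis using has_integral_integral_lebesgue_on[OF dc(1)] by auto
qed

lemma is_traj_lim_traj: "is_traj N T \<xi>0 lim_control lim_traj"
  unfolding is_traj_def
  using G_continuous lim_traj_has_integral by (simp add: lim_traj_def)

lemma cost_tendsto: "(\<lambda>n. cost N T (snd (P n))) \<longlonglongrightarrow> cost N T lim_traj"
  unfolding cost_def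
proof (rule dominated_convergence(2))
  show "(\<lambda>t. Vfun N (snd (P n) t)) integrable_on {0..T}" for n
    by (rule integrable_Vfun_traj[OF P_is_traj])
  show "(\<lambda>t. (traj_bound N \<xi>0)\<^sup>2) integrable_on {0..T}" by (rule integrable_const_ivl)
  fix n t assume t: "t \<in> {0..T}"
  have "Vfun N (snd (P n) t) \<le> (1 / real N) * (\<Sum>i<N. (traj_bound N \<xi>0)\<^sup>2)"
    unfolding Vfun_def
  proof (intro mult_left_mono sum_mono)
    fix i assume "i \<in> {..<N}"
    then have "\<bar>snd (P n) t i\<bar> \<le> \<bar>traj_bound N \<xi>0\<bar>"
      using traj_abs_le_bound[OF P_is_traj P_admissible m0 _ t, of i n] by simp
    then show "(snd (P n) t i)\<^sup>2 \<le> (traj_bound N \<xi>0)\<^sup>2" by (simp add: abs_le_square_iff)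
  qed simp
  then show "norm (Vfun N (snd (P n) t)) \<le> (traj_bound N \<xi>0)\<^sup>2"
    using Vfun_nonneg[of N "snd (P n) t"] by (cases "N = 0") (simp_all add: Vfun_def)
next
  fix t assume "t \<in> {0..T}"
  then show "(\<lambda>n. Vfun N (snd (P n) t)) \<longlonglongrightarrow> Vfun N (lim_traj t)"
    unfolding Vfun_def lim_traj_def by (intro tendsto_intros) (use traj_tendsto in auto)
qed
end

lemma eff_control_L1_cauchy:
  fixes P :: "nat \<Rightarrow> control_traj"
  assumes m0: "mean N \<xi>0 \<ge> 0" and T: "T \<ge> 0" and feas: "\<And>n. feasible N T \<xi>0 (P n)"
    and cauchy: "\<And>e. e > 0 \<Longrightarrow> \<exists>M. \<forall>n\<ge>M. \<forall>k\<ge>M. eff_dist N T (P n) (P k) < e"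
    and i: "i < N" and e: "e > 0"
  shows "\<exists>M. \<forall>n\<ge>M. \<forall>k\<ge>M.
    (LINT t|lebesgue_on {0..T}. norm (eff_control N (P n) i t - eff_control N (P k) i t)) < e"
proof -
  define d where "d = e / (2 * (T + 1))"
  have d: "d > 0" "d * T < e / 2" using e T by (simp_all add: d_def field_simps)
  obtain M where M: "\<And>n k. n \<ge> M \<Longrightarrow> k \<ge> M \<Longrightarrow> eff_dist N T (P n) (P k) < d * (e / 2)"
    using cauchy[of "d * (e / 2)"] d e by auto
  show ?thesis
  proof (intro exI[of _ M] allI impI)
    fix n k assume "n \<ge> M" "k \<ge> M"
    then have "eff_dist N T (P n) (P k) / d < e / 2"
      using M d by (simp add: divide_less_eq mult.commute)
    then show "(LINT t|lebesgue_on {0..T}. norm (eff_control N (P n) i t - eff_control N (P k) i t)) < e"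
      using L1_dist_eff_control_le[OF m0 T feas feas i d(1), of n k] d(2) by linarith
  qed
qed

lemma exists_common_subseq:
  fixes Q :: "nat \<Rightarrow> (nat \<Rightarrow> nat) \<Rightarrow> bool"
  assumes step: "\<And>i (r :: nat \<Rightarrow> nat). i < K \<Longrightarrow> strict_mono r \<Longrightarrow> \<exists>r'. strict_mono r' \<and> Q i (r \<circ> r')"
    and stable: "\<And>i r (r' :: nat \<Rightarrow> nat). i < K \<Longrightarrow> Q i r \<Longrightarrow> strict_mono r' \<Longrightarrow> Q i (r \<circ> r')"
  shows "\<exists>r. strict_mono r \<and> (\<forall>i<K. Q i r)"
proof -
  have "\<exists>r. strict_mono r \<and> (\<forall>i<k. Q i r)" if "k \<le> K" for k
    using that
  proof (induction k)
    case 0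
    show ?case by (intro exI[of _ id]) (simp add: strict_mono_def)
  next
    case (Suc k)
    then obtain r where r: "strict_mono r" "\<forall>i<k. Q i r" by auto
    obtain r' where r': "strict_mono r'" "Q k (r \<circ> r')" using step[of k r] Suc.prems r(1) by auto
    have "\<forall>i<Suc k. Q i (r \<circ> r')"
      using stable r r' Suc.prems by (metis less_Suc_eq order_less_le_trans)
    then show ?case using strict_mono_o[OF r(1) r'(1)] by blast
  qed
  then show ?thesis by blast
qed

text \<open>Arzela-Ascoli for the (equi-Lipschitz, bounded) trajectories, and an a.e. convergent subsequence of
  the \<open>L\<^sup>1\<close>-Cauchy effective controls.\<close>
lemma exists_subseq_uniform_ae_cauchy:
  fixes P :: "nat \<Rightarrow> control_traj"
  assumes m0: "mean N \<xi>0 \<ge> 0" and feas: "\<And>n. feasible N T \<xi>0 (P n)" and i: "i < N"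
    and L1: "\<And>e. e > 0 \<Longrightarrow> \<exists>M. \<forall>n\<ge>M. \<forall>k\<ge>M.
      (LINT t|lebesgue_on {0..T}. norm (eff_control N (P n) i t - eff_control N (P k) i t)) < e"
  obtains g r where "strict_mono r" "continuous_on {0..T} g"
    "uniform_limit {0..T} (\<lambda>n x. snd (P (r n)) x i) g sequentially"
    "AE t in lebesgue_on {0..T}. Cauchy (\<lambda>n. eff_control N (P (r n)) i t)"
proof -
  define B where "B = traj_bound N \<xi>0"
  have B: "0 \<le> B" using traj_bound_nonneg[OF m0] by (simp add: B_def)
  have adm: "admissible N T (fst (P n))" and tr: "is_traj N T \<xi>0 (fst (P n)) (snd (P n))" for n
    using feas by (auto simp: feasible_def)
  obtain g and r1 :: "nat \<Rightarrow> nat" where g: "continuous_on {0..T} g" and r1: "strict_mono r1"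
    and unif: "\<And>e. 0 < e \<Longrightarrow> \<exists>M. \<forall>n x. n \<ge> M \<and> x \<in> {0..T} \<longrightarrow> norm (snd (P (r1 n)) x i - g x) < e"
  proof (rule Arzela_Ascoli[of "{0..T}" "\<lambda>n x. snd (P n) x i" B])
    fix n x assume "x \<in> {0..T::real}"
    then show "norm (snd (P n) x i) \<le> B" using traj_abs_le_bound[OF tr adm m0 i] by (simp add: B_def)
  next
    fix x e assume x: "x \<in> {0..T::real}" and e: "0 < (e::real)"
    show "\<exists>d>0. \<forall>n y. y \<in> {0..T} \<and> norm (x - y) < d \<longrightarrow> norm (snd (P n) x i - snd (P n) y i) < e"
    proof (intro exI[of _ "e / (2 * B + 1)"] conjI allI impI)
      show "0 < e / (2 * B + 1)" using e B by simp
      fix n y assume y: "y \<in> {0..T} \<and> norm (x - y) < e / (2 * B + 1)"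
      have "\<bar>snd (P n) x i - snd (P n) y i\<bar> \<le> 2 * B * \<bar>x - y\<bar>"
        using traj_lipschitz[OF tr adm m0 i x] y by (simp add: B_def)
      also have "\<dots> \<le> 2 * B * (e / (2 * B + 1))" using y B by (intro mult_left_mono) auto
      also have "\<dots> < e" using e B by (simp add: field_simps)
      finally show "norm (snd (P n) x i - snd (P n) y i) < e" by simp
    qed
  qed (use that in auto)
  obtain r2 :: "nat \<Rightarrow> nat" where r2: "strict_mono r2"
    and ae: "AE t in lebesgue_on {0..T}. Cauchy (\<lambda>n. eff_control N (P (r1 (r2 n))) i t)"
  proof (rule cauchy_L1_AE_cauchy_subseq[of "lebesgue_on {0..T}" "\<lambda>n. eff_control N (P (r1 n)) i"])
    show "integrable (lebesgue_on {0..T}) (eff_control N (P (r1 n)) i)" for n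
      by (rule bounded_measurable_integrable(1)[OF eff_control_measurable[OF feas i], where B = "mean N \<xi>0"])
        (use eff_control_bounds(1,3)[OF m0 feas _ i] in fastforce)
  next
    fix e :: real assume "e > 0"
    then obtain M where "\<forall>n\<ge>M. \<forall>k\<ge>M.
        (LINT t|lebesgue_on {0..T}. norm (eff_control N (P n) i t - eff_control N (P k) i t)) < e"
      using L1 by blast
    moreover have "n \<le> r1 n" for n using seq_suble[OF r1] .
    ultimately show "\<exists>M. \<forall>n\<ge>M. \<forall>k\<ge>M.
        (LINT t|lebesgue_on {0..T}. norm (eff_control N (P (r1 n)) i t - eff_control N (P (r1 k)) i t)) < e"
      by (meson order_trans)
  qed (use that in auto)
  have "uniform_limit {0..T} (\<lambda>n x. snd (P (r1 n)) x i) g sequentially"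
    unfolding uniform_limit_sequentially_iff dist_real_def
  proof (intro allI impI)
    fix e :: real assume "e > 0"
    then obtain M where "\<forall>n x. n \<ge> M \<and> x \<in> {0..T} \<longrightarrow> norm (snd (P (r1 n)) x i - g x) < e"
      using unif by blast
    then show "\<exists>M. \<forall>n\<ge>M. \<forall>x\<in>{0..T}. \<bar>snd (P (r1 n)) x i - g x\<bar> < e" by (auto intro!: exI[of _ M])
  qed
  then have "uniform_limit {0..T} (\<lambda>n x. snd (P (r1 (r2 n))) x i) g sequentially"
    using filterlim_compose[OF _ filterlim_subseq[OF r2]] by (auto simp: o_def)
  then show ?thesis
    using that[of "r1 \<circ> r2" g] strict_mono_o[OF r1 r2] g ae by simp
qed

lemma uniform_limit_subseq:
  assumes "uniform_limit S f g sequentially" "strict_mono r"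
  shows "uniform_limit S (\<lambda>n. f (r n)) g sequentially"
  using filterlim_compose[OF assms(1) filterlim_subseq[OF assms(2)]] by (simp add: o_def)

theorem exists_optimal_control:
  assumes m0: "mean N \<xi>0 \<ge> 0" and T: "T \<ge> 0"
  shows "\<exists>\<alpha> \<xi>. admissible N T \<alpha> \<and> is_traj N T \<xi>0 \<alpha> \<xi> \<and>
    (\<forall>\<beta> \<eta>. admissible N T \<beta> \<and> is_traj N T \<xi>0 \<beta> \<eta> \<longrightarrow> cost N T \<xi> \<le> cost N T \<eta>)"
proof -
  obtain P where feas: "\<And>n. feasible N T \<xi>0 (P n)"
    and near: "\<And>n. cost N T (snd (P n)) \<le> min_cost N T \<xi>0 + 1 / real (Suc n)"
    and cauchy: "\<And>e. e > 0 \<Longrightarrow> \<exists>M. \<forall>n\<ge>M. \<forall>k\<ge>M. eff_dist N T (P n) (P k) < e"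
    using exists_minimizing_seq_eff_cauchy[OF m0 T] by blast
  define Q where "Q i r \<longleftrightarrow>
      (\<exists>g. continuous_on {0..T} g \<and> uniform_limit {0..T} (\<lambda>n x. snd (P (r n)) x i) g sequentially) \<and>
      (AE t in lebesgue_on {0..T}. Cauchy (\<lambda>n. eff_control N (P (r n)) i t))" for i and r :: "nat \<Rightarrow> nat"
  have "\<exists>R. strict_mono R \<and> (\<forall>i<N. Q i R)"
  proof (rule exists_common_subseq)
    fix i and r :: "nat \<Rightarrow> nat" assume i: "i < N" and r: "strict_mono r"
    have "\<exists>M. \<forall>n\<ge>M. \<forall>k\<ge>M.
        (LINT t|lebesgue_on {0..T}. norm (eff_control N (P (r n)) i t - eff_control N (P (r k)) i t)) < e"
      if e: "e > 0" for e
    proof -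
      obtain M where M: "\<forall>n\<ge>M. \<forall>k\<ge>M.
          (LINT t|lebesgue_on {0..T}. norm (eff_control N (P n) i t - eff_control N (P k) i t)) < e"
        using eff_control_L1_cauchy[OF m0 T feas cauchy i e] by blast
      have "M \<le> r n" if "M \<le> n" for n using seq_suble[OF r, of n] that by linarith
      then show ?thesis using M by blast
    qed
    then obtain g r' where "strict_mono r'" "continuous_on {0..T} g"
      "uniform_limit {0..T} (\<lambda>n x. snd (P (r (r' n))) x i) g sequentially"
      "AE t in lebesgue_on {0..T}. Cauchy (\<lambda>n. eff_control N (P (r (r' n))) i t)"
      by (rule exists_subseq_uniform_ae_cauchy[where P = "\<lambda>n. P (r n)", OF m0 feas i])
    then show "\<exists>r'. strict_mono r' \<and> Q i (r \<circ> r')" unfolding Q_def by auto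
  next
    fix i r and r' :: "nat \<Rightarrow> nat" assume "Q i r" and r': "strict_mono r'"
    then obtain g where "continuous_on {0..T} g" "uniform_limit {0..T} (\<lambda>n x. snd (P (r n)) x i) g sequentially"
      and ae: "AE t in lebesgue_on {0..T}. Cauchy (\<lambda>n. eff_control N (P (r n)) i t)"
      unfolding Q_def by blast
    moreover have "AE t in lebesgue_on {0..T}. Cauchy (\<lambda>n. eff_control N (P (r (r' n))) i t)"
      using ae by eventually_elim (drule Cauchy_subseq_Cauchy[OF _ r'], simp add: o_def)
    ultimately show "Q i (r \<circ> r')"
      unfolding Q_def using uniform_limit_subseq[OF _ r'] by auto
  qed
  then obtain R where R: "strict_mono R" and QR: "\<And>i. i < N \<Longrightarrow> Q i R" by blast
  have "\<forall>i. \<exists>g. i < N \<longrightarrow>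
      continuous_on {0..T} g \<and> uniform_limit {0..T} (\<lambda>n x. snd (P (R n)) x i) g sequentially"
    using QR unfolding Q_def by blast
  then obtain G where G: "\<And>i. i < N \<Longrightarrow> continuous_on {0..T} (G i)"
    "\<And>i. i < N \<Longrightarrow> uniform_limit {0..T} (\<lambda>n x. snd (P (R n)) x i) (G i) sequentially"
    by (metis choice)
  interpret L: limit_of_feasible N T \<xi>0 "\<lambda>n. P (R n)" G
  proof
    show "mean N \<xi>0 \<ge> 0" by (rule m0)
    show "feasible N T \<xi>0 (P (R n))" for n by (rule feas)
    show "continuous_on {0..T} (G i)" if "i < N" for i by (rule G(1)[OF that])
    show "(\<lambda>n. snd (P (R n)) t i) \<longlonglongrightarrow> G i t" if "i < N" "t \<in> {0..T}" for i t
      by (rule tendsto_uniform_limitI[OF G(2)[OF that(1)] that(2)])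
    have "AE t in lebesgue_on {0..T}. Cauchy (\<lambda>n. eff_control N (P (R n)) i t)" if "i \<in> {..<N}" for i
      using QR[of i] that unfolding Q_def by simp
    then show "AE t in lebesgue_on {0..T}. \<forall>i\<in>{..<N}. Cauchy (\<lambda>n. eff_control N (P (R n)) i t)"
      by (rule AE_finite_allI[OF finite_lessThan])
  qed
  have "(\<lambda>n. cost N T (snd (P (R n)))) \<longlonglongrightarrow> min_cost N T \<xi>0"
  proof (rule tendsto_sandwich[where f = "\<lambda>n. min_cost N T \<xi>0" and h = "\<lambda>n. min_cost N T \<xi>0 + 1 / real (Suc n)"])
    show "\<forall>\<^sub>F n in sequentially. min_cost N T \<xi>0 \<le> cost N T (snd (P (R n)))"
      using min_cost_le[OF feas] by simp
    have "cost N T (snd (P (R n))) \<le> min_cost N T \<xi>0 + 1 / real (Suc n)" for n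
    proof -
      have "1 / real (Suc (R n)) \<le> 1 / real (Suc n)"
        using seq_suble[OF R, of n] by (simp add: frac_le)
      then show ?thesis using near[of "R n"] by linarith
    qed
    then show "\<forall>\<^sub>F n in sequentially. cost N T (snd (P (R n))) \<le> min_cost N T \<xi>0 + 1 / real (Suc n)"
      by simp
    show "(\<lambda>n. min_cost N T \<xi>0 + 1 / real (Suc n)) \<longlonglongrightarrow> min_cost N T \<xi>0"
      using tendsto_add[OF tendsto_const LIMSEQ_inverse_real_of_nat, of "min_cost N T \<xi>0"]
      by (simp add: inverse_eq_divide)
  qed simp
  then have "cost N T L.lim_traj = min_cost N T \<xi>0" using L.cost_tendsto LIMSEQ_unique by blast
  moreover have "min_cost N T \<xi>0 \<le> cost N T \<eta>" if "admissible N T \<beta>" "is_traj N T \<xi>0 \<beta> \<eta>" for \<beta> \<eta>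
    using min_cost_le[of N T \<xi>0 "(\<beta>, \<eta>)"] that by (simp add: feasible_def)
  ultimately show ?thesis
    using L.admissible_lim_control L.is_traj_lim_traj by (intro exI[of _ L.lim_control] exI[of _ L.lim_traj]) auto
qed

theorem lemma2:
  fixes N :: nat and T :: real and \<xi>0 :: "nat \<Rightarrow> real"
  assumes "N \<ge> 1" and "T > 0"
    and "mean N \<xi>0 > 0"
    and "\<And>i j. i \<le> j \<Longrightarrow> j < N \<Longrightarrow> \<xi>0 j \<le> \<xi>0 i"
  shows "\<exists>\<alpha> \<xi>. admissible N T \<alpha> \<and> is_traj N T \<xi>0 \<alpha> \<xi> \<and>
           (\<forall>\<beta> \<eta>. admissible N T \<beta> \<and> is_traj N T \<xi>0 \<beta> \<eta> \<longrightarrow> cost N T \<xi> \<le> cost N T \<eta>) \<and>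
           (\<forall>t\<in>{0..T}. \<forall>i j. i < j \<and> j < N \<longrightarrow> \<xi> t j \<le> \<xi> t i)"
proof -
  have m0: "mean N \<xi>0 \<ge> 0" and T: "T \<ge> 0" using assms(2,3) by simp_all
  obtain \<alpha> \<xi> where adm: "admissible N T \<alpha>" and tr: "is_traj N T \<xi>0 \<alpha> \<xi>"
    and opt: "\<forall>\<beta> \<eta>. admissible N T \<beta> \<and> is_traj N T \<xi>0 \<beta> \<eta> \<longrightarrow> cost N T \<xi> \<le> cost N T \<eta>"
    using exists_optimal_control[OF m0 T] by blast
  have "\<forall>t\<in>{0..T}. \<forall>i j. i < j \<and> j < N \<longrightarrow> \<xi> t j \<le> \<xi> t i"
    using optimal_traj_ordered[OF assms(2) m0 assms(4) adm tr opt] by simp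
  with adm tr opt show ?thesis by (intro exI conjI)
qed

end
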